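(* Let $k$ be a field of characteristic $\neq 2$, let $\mathfrak g_\boxtimes$ be the Tetrahedron algebra over $k$, and let $\mathfrak f$ be the Lie algebra over $k$ generated by $z_0,z_1,z_2$ subject to the relations, for every $i\in\{0,1,2\}$ with indices modulo $3$: $[[z_i,z_{i+1}],z_{i+2}]=0$; $[z_i,[z_i,z_{i+1}]]=z_{i+1}+[z_{i+2},z_i]$; $\bigl[[z_{i+1},[z_{i+1},[z_{i+1},z_i]]],[z_{i+1},z_i]\bigr]=0$. Then there is a Lie algebra isomorphism $\Phi:\mathfrak g_\boxtimes\to\mathfrak f$ such that $\Phi(X_{01})=2(z_2-[z_1,z_2])$, $\Phi(X_{23})=2(z_2+[z_1,z_2])$, $\Phi(X_{02})=2(z_0-[z_2,z_0])$, $\Phi(X_{31})=2(z_0+[z_2,z_0])$, $\Phi(X_{03})=2(z_1-[z_0,z_1])$, $\Phi(X_{12})=2(z_1+[z_0,z_1])$.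
   Context: The Tetrahedron algebra $\mathfrak g_\boxtimes$ is the Lie algebra over $k$ with generators $X_{ij}$ ($i,j\in\{0,1,2,3\}$, $i\neq j$) and relations $X_{ij}+X_{ji}=0$ for $i\neq j$; $[X_{ij},X_{jk}]=2(X_{ij}+X_{jk})$ for mutually distinct $i,j,k$; $[X_{hi},[X_{hi},[X_{hi},X_{jk}]]]=4[X_{hi},X_{jk}]$ for mutually distinct $h,i,j,k$. *)

theory Defs
  imports Main
begin

text \<open>The free non-associative algebra over a field 'k on a set S of generators is
realised as finitely supported 'k-valued functions on binary trees whose leaves lie in S
(the basis of tree monomials); the product is the bilinear extension of grafting.
The Lie algebra presented by generators S and relations R is the quotient of this
algebra by the two-sided ideal generated by R, all squares a*a and all Jacobi
expressions.\<close>

datatype 'a mtree = Leaf 'a | Node "'a mtree" "'a mtree"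

fun leaves :: "'a mtree \<Rightarrow> 'a set" where
  "leaves (Leaf x) = {x}"
| "leaves (Node a b) = leaves a \<union> leaves b"

type_synonym ('a,'k) fm = "'a mtree \<Rightarrow> 'k"

definition FM :: "'a set \<Rightarrow> ('a,'k::field) fm set" where
  "FM S = {f. finite {t. f t \<noteq> 0} \<and> (\<forall>t. f t \<noteq> 0 \<longrightarrow> leaves t \<subseteq> S)}"

definition vzero :: "('a,'k::field) fm" where "vzero = (\<lambda>_. 0)"
definition vadd :: "('a,'k::field) fm \<Rightarrow> ('a,'k) fm \<Rightarrow> ('a,'k) fm" where
  "vadd f g = (\<lambda>t. f t + g t)"
definition vsmult :: "'k::field \<Rightarrow> ('a,'k) fm \<Rightarrow> ('a,'k) fm" where
  "vsmult c f = (\<lambda>t. c * f t)"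
definition vsub :: "('a,'k::field) fm \<Rightarrow> ('a,'k) fm \<Rightarrow> ('a,'k) fm" where
  "vsub f g = (\<lambda>t. f t - g t)"
definition vgen :: "'a \<Rightarrow> ('a,'k::field) fm" where
  "vgen x = (\<lambda>t. if t = Leaf x then 1 else 0)"
definition vbr :: "('a,'k::field) fm \<Rightarrow> ('a,'k) fm \<Rightarrow> ('a,'k) fm" where
  "vbr f g = (\<lambda>t. case t of Leaf _ \<Rightarrow> 0 | Node a b \<Rightarrow> f a * g b)"

definition jacobi :: "('a,'k::field) fm \<Rightarrow> ('a,'k) fm \<Rightarrow> ('a,'k) fm \<Rightarrow> ('a,'k) fm" where
  "jacobi a b c = vadd (vbr a (vbr b c)) (vadd (vbr b (vbr c a)) (vbr c (vbr a b)))"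

inductive_set pideal :: "'a set \<Rightarrow> ('a,'k::field) fm set \<Rightarrow> ('a,'k) fm set"
  for S :: "'a set" and R :: "('a,'k) fm set" where
  rel: "r \<in> R \<Longrightarrow> r \<in> pideal S R"
| alt: "a \<in> FM S \<Longrightarrow> vbr a a \<in> pideal S R"
| jac: "a \<in> FM S \<Longrightarrow> b \<in> FM S \<Longrightarrow> c \<in> FM S \<Longrightarrow> jacobi a b c \<in> pideal S R"
| zero: "vzero \<in> pideal S R"
| add: "x \<in> pideal S R \<Longrightarrow> y \<in> pideal S R \<Longrightarrow> vadd x y \<in> pideal S R"
| smult: "x \<in> pideal S R \<Longrightarrow> vsmult c x \<in> pideal S R"
| left: "x \<in> pideal S R \<Longrightarrow> a \<in> FM S \<Longrightarrow> vbr a x \<in> pideal S R"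
| right: "x \<in> pideal S R \<Longrightarrow> a \<in> FM S \<Longrightarrow> vbr x a \<in> pideal S R"

definition pcls :: "'a set \<Rightarrow> ('a,'k::field) fm set \<Rightarrow> ('a,'k) fm \<Rightarrow> ('a,'k) fm set" where
  "pcls S R f = {g \<in> FM S. vsub g f \<in> pideal S R}"

definition pcarrier :: "'a set \<Rightarrow> ('a,'k::field) fm set \<Rightarrow> ('a,'k) fm set set" where
  "pcarrier S R = pcls S R ` FM S"

definition prep :: "('a,'k::field) fm set \<Rightarrow> ('a,'k) fm" where
  "prep A = (SOME f. f \<in> A)"

definition padd :: "'a set \<Rightarrow> ('a,'k::field) fm set \<Rightarrow> ('a,'k) fm set \<Rightarrow> ('a,'k) fm set \<Rightarrow> ('a,'k) fm set" where
  "padd S R A B = pcls S R (vadd (prep A) (prep B))"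
definition psmult :: "'a set \<Rightarrow> ('a,'k::field) fm set \<Rightarrow> 'k \<Rightarrow> ('a,'k) fm set \<Rightarrow> ('a,'k) fm set" where
  "psmult S R c A = pcls S R (vsmult c (prep A))"
definition pbr :: "'a set \<Rightarrow> ('a,'k::field) fm set \<Rightarrow> ('a,'k) fm set \<Rightarrow> ('a,'k) fm set \<Rightarrow> ('a,'k) fm set" where
  "pbr S R A B = pcls S R (vbr (prep A) (prep B))"
definition pgen :: "'a set \<Rightarrow> ('a,'k::field) fm set \<Rightarrow> 'a \<Rightarrow> ('a,'k) fm set" where
  "pgen S R x = pcls S R (vgen x)"

definition plie_iso ::
  "'a set \<Rightarrow> ('a,'k::field) fm set \<Rightarrow> 'b set \<Rightarrow> ('b,'k) fm set
   \<Rightarrow> (('a,'k) fm set \<Rightarrow> ('b,'k) fm set) \<Rightarrow> bool" where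
  "plie_iso S R S' R' \<Phi> \<longleftrightarrow>
     bij_betw \<Phi> (pcarrier S R) (pcarrier S' R') \<and>
     (\<forall>A\<in>pcarrier S R. \<forall>B\<in>pcarrier S R. \<Phi> (padd S R A B) = padd S' R' (\<Phi> A) (\<Phi> B)) \<and>
     (\<forall>c. \<forall>A\<in>pcarrier S R. \<Phi> (psmult S R c A) = psmult S' R' c (\<Phi> A)) \<and>
     (\<forall>A\<in>pcarrier S R. \<forall>B\<in>pcarrier S R. \<Phi> (pbr S R A B) = pbr S' R' (\<Phi> A) (\<Phi> B))"

definition tet_S :: "(nat \<times> nat) set" where
  "tet_S = {(i,j). i < 4 \<and> j < 4 \<and> i \<noteq> j}"

definition tX :: "nat \<Rightarrow> nat \<Rightarrow> (nat \<times> nat, 'k::field) fm" where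
  "tX i j = vgen (i,j)"

definition tet_R :: "(nat \<times> nat, 'k::field) fm set" where
  "tet_R =
     {vadd (tX i j) (tX j i) | i j. i < 4 \<and> j < 4 \<and> i \<noteq> j}
   \<union> {vsub (vbr (tX i j) (tX j k)) (vsmult 2 (vadd (tX i j) (tX j k))) | i j k.
        i < 4 \<and> j < 4 \<and> k < 4 \<and> i \<noteq> j \<and> j \<noteq> k \<and> i \<noteq> k}
   \<union> {vsub (vbr (tX h i) (vbr (tX h i) (vbr (tX h i) (tX j k)))) (vsmult 4 (vbr (tX h i) (tX j k)))
        | h i j k. h < 4 \<and> i < 4 \<and> j < 4 \<and> k < 4 \<and>
          h \<noteq> i \<and> h \<noteq> j \<and> h \<noteq> k \<and> i \<noteq> j \<and> i \<noteq> k \<and> j \<noteq> k}"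

definition f_S :: "nat set" where "f_S = {0,1,2}"

definition fz :: "nat \<Rightarrow> (nat, 'k::field) fm" where
  "fz i = vgen (i mod 3)"

definition f_R :: "(nat, 'k::field) fm set" where
  "f_R =
     {vbr (vbr (fz i) (fz (i+1))) (fz (i+2)) | i. i < 3}
   \<union> {vsub (vbr (fz i) (vbr (fz i) (fz (i+1)))) (vadd (fz (i+1)) (vbr (fz (i+2)) (fz i))) | i. i < 3}
   \<union> {vbr (vbr (fz (i+1)) (vbr (fz (i+1)) (vbr (fz (i+1)) (fz i)))) (vbr (fz (i+1)) (fz i)) | i. i < 3}"

abbreviation TX :: "nat \<Rightarrow> nat \<Rightarrow> (nat \<times> nat, 'k::field) fm set" where
  "TX i j \<equiv> pgen tet_S (tet_R :: (nat \<times> nat, 'k) fm set) (i,j)"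
abbreviation Z :: "nat \<Rightarrow> (nat, 'k::field) fm set" where
  "Z i \<equiv> pgen f_S (f_R :: (nat, 'k) fm set) i"
abbreviation Fadd :: "(nat, 'k::field) fm set \<Rightarrow> _ \<Rightarrow> _" where
  "Fadd \<equiv> padd f_S f_R"
abbreviation Fsmult :: "'k::field \<Rightarrow> (nat, 'k) fm set \<Rightarrow> _" where
  "Fsmult \<equiv> psmult f_S f_R"
abbreviation Fbr :: "(nat, 'k::field) fm set \<Rightarrow> _ \<Rightarrow> _" where
  "Fbr \<equiv> pbr f_S f_R"

end

(*
  Both algebras are presented by generators and relations, so homomorphisms out of them are
  substitutions of the generators that respect the relations, and two such substitutions that are
  inverse to each other on generators give an isomorphism (plie_iso_phom). The heart of the proof
  is a correspondence, valid in every Lie algebra over a field of characteristic not 2, between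
  triples z0, z1, z2 satisfying the relations of f and families X_ij satisfying the relations of
  the tetrahedron algebra:
    X01, X23 = 2 (z2 -/+ [z1,z2]),   X02, X31 = 2 (z0 -/+ [z2,z0]),   X03, X12 = 2 (z1 -/+ [z0,z1]),
    z0 = (X02 + X31) / 4,   z1 = (X03 + X12) / 4,   z2 = (X01 + X23) / 4,
  the two constructions being inverse to each other. Applied to the generators of the two presented
  algebras, this yields mutually inverse homomorphisms.

  On either side the first relations close the span of six elements (the X_ij, resp. the z_i and
  the [z_i,z_(i+1)]) under brackets up to three further brackets, with explicit structure
  constants, so the quadratic relations of the tetrahedron algebra and the first two relations of f
  become coefficient comparisons. The remaining relations are matched along pairs of opposite
  edges: for a = z_(i+1), w = [z_i,z_(i+1)] and u = [a,w] the relations of f give [w,[a,u]] = 0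
  and [a,[a,u]] + [w,[w,u]] = u, hence the Dolan-Grady relations for 2 (a - w) and 2 (a + w);
  conversely, the Dolan-Grady relations for two opposite edges P, Q give [[P + Q,[P,Q]], P - Q] = 0,
  which is the third relation of f.
*)

theory Submission
  imports Defs
begin

section \<open>Presented algebras and substitutions\<close>

definition vtree :: "'a mtree \<Rightarrow> ('a,'k::field) fm" where
  "vtree t = (\<lambda>u. if u = t then 1 else 0)"

lemma vgen_vtree: "vgen x = vtree (Leaf x)"
  by (simp add: vgen_def vtree_def)

lemma FM_vzero [simp]: "vzero \<in> FM S"
  by (simp add: FM_def vzero_def)

lemma FM_vadd [simp]:
  assumes "f \<in> FM S" "g \<in> FM S" shows "vadd f g \<in> FM S"
proof -
  have "{t. vadd f g t \<noteq> 0} \<subseteq> {t. f t \<noteq> 0} \<union> {t. g t \<noteq> 0}" by (auto simp: vadd_def)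
  then show ?thesis using assms unfolding FM_def by (auto simp: vadd_def intro: finite_subset)
qed

lemma FM_vsmult [simp]:
  assumes "f \<in> FM S" shows "vsmult c f \<in> FM S"
proof -
  have "{t. vsmult c f t \<noteq> 0} \<subseteq> {t. f t \<noteq> 0}" by (auto simp: vsmult_def)
  then show ?thesis using assms unfolding FM_def by (auto simp: vsmult_def intro: finite_subset)
qed

lemma vsub_conv_vadd: "vsub f g = vadd f (vsmult (-1) g)"
  by (auto simp: vsub_def vadd_def vsmult_def)

lemma vsub_self [simp]: "vsub f f = vzero"
  by (simp add: vsub_def vzero_def)

lemma vsub_vzero [simp]: "vsub f vzero = f"
  by (simp add: vsub_def vzero_def)

lemma FM_vsub [simp]: "f \<in> FM S \<Longrightarrow> g \<in> FM S \<Longrightarrow> vsub f g \<in> FM S"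
  by (simp add: vsub_conv_vadd)

lemma FM_vtree: "leaves t \<subseteq> S \<Longrightarrow> vtree t \<in> FM S"
  by (simp add: FM_def vtree_def)

lemma FM_vgen [simp]: "x \<in> S \<Longrightarrow> vgen x \<in> FM S"
  by (simp add: vgen_vtree FM_vtree)

lemma FM_vbr [simp]:
  assumes "f \<in> FM S" "g \<in> FM S" shows "vbr f g \<in> FM S"
proof -
  have "{u. vbr f g u \<noteq> 0} \<subseteq> (\<lambda>(a,b). Node a b) ` ({t. f t \<noteq> 0} \<times> {t. g t \<noteq> 0})"
  proof
    fix u assume "u \<in> {u. vbr f g u \<noteq> 0}"
    then show "u \<in> (\<lambda>(a,b). Node a b) ` ({t. f t \<noteq> 0} \<times> {t. g t \<noteq> 0})"
      by (cases u) (auto simp: vbr_def)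
  qed
  moreover have "finite ((\<lambda>(a,b). Node a b) ` ({t. f t \<noteq> 0} \<times> {t. g t \<noteq> 0}))"
    using assms by (simp add: FM_def)
  moreover have "leaves u \<subseteq> S" if "vbr f g u \<noteq> 0" for u
    using that assms by (auto simp: vbr_def FM_def split: mtree.splits)
  ultimately show ?thesis unfolding FM_def by (auto intro: finite_subset)
qed

lemma vadd_assoc: "vadd (vadd f g) h = vadd f (vadd g h)"
  by (simp add: vadd_def add.assoc)

lemma vadd_commute: "vadd f g = vadd g f"
  by (simp add: vadd_def add.commute)

lemma vadd_vzero_left: "vadd vzero f = f"
  by (simp add: vadd_def vzero_def)

lemma vadd_neg_left: "vadd (vsmult (-1) f) f = vzero"
  by (simp add: vadd_def vsmult_def vzero_def)

lemma vsmult_add_left: "vsmult (s + t) f = vadd (vsmult s f) (vsmult t f)"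
  by (simp add: vadd_def vsmult_def distrib_right)

lemma vsmult_vadd: "vsmult s (vadd f g) = vadd (vsmult s f) (vsmult s g)"
  by (simp add: vadd_def vsmult_def distrib_left)

lemma vsmult_vsmult: "vsmult s (vsmult t f) = vsmult (s * t) f"
  by (simp add: vsmult_def mult.assoc)

lemma vsmult_one: "vsmult 1 f = f"
  by (simp add: vsmult_def)

lemma FM_UNIV_I: "f \<in> FM S \<Longrightarrow> f \<in> FM UNIV"
  by (auto simp: FM_def)

lemma vbr_vadd_left: "vbr (vadd f g) h = vadd (vbr f h) (vbr g h)"
  by (rule ext) (simp add: vbr_def vadd_def algebra_simps split: mtree.split)

lemma vbr_vadd_right: "vbr h (vadd f g) = vadd (vbr h f) (vbr h g)"
  by (rule ext) (simp add: vbr_def vadd_def algebra_simps split: mtree.split)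

lemma vbr_vsmult_left: "vbr (vsmult c f) h = vsmult c (vbr f h)"
  by (rule ext) (simp add: vbr_def vsmult_def algebra_simps split: mtree.split)

lemma vbr_vsmult_right: "vbr h (vsmult c f) = vsmult c (vbr h f)"
  by (rule ext) (simp add: vbr_def vsmult_def algebra_simps split: mtree.split)

lemma vbr_vzero_left [simp]: "vbr vzero h = vzero"
  by (rule ext) (simp add: vbr_def vzero_def split: mtree.split)

lemma vbr_vzero_right [simp]: "vbr h vzero = vzero"
  by (rule ext) (simp add: vbr_def vzero_def split: mtree.split)

lemma vbr_vtree: "vbr (vtree s) (vtree t) = vtree (Node s t)"
  by (rule ext) (simp add: vbr_def vtree_def split: mtree.split)

lemma FM_induct [consumes 1, case_names zero step]:
  assumes "f \<in> FM S" "P vzero"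
    and step: "\<And>c t g. leaves t \<subseteq> S \<Longrightarrow> g \<in> FM S \<Longrightarrow> P g \<Longrightarrow> P (vadd (vsmult c (vtree t)) g)"
  shows "P f"
proof -
  have "\<forall>f. f \<in> FM S \<longrightarrow> {t. f t \<noteq> 0} \<subseteq> T \<longrightarrow> P f" if "finite T" for T
    using that
  proof (induction T rule: finite_induct)
    case empty
    have "f = vzero" if "{t. f t \<noteq> 0} \<subseteq> {}" for f :: "('a,'b) fm"
      using that by (auto simp: vzero_def)
    then show ?case using assms(2) by blast
  next
    case (insert t T)
    show ?case
    proof (intro allI impI)
      fix f :: "('a,'b) fm" assume f: "f \<in> FM S" "{t. f t \<noteq> 0} \<subseteq> insert t T"
      let ?g = "f(t := 0)"
      have g: "?g \<in> FM S" using f(1) unfolding FM_def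
        by (auto intro: finite_subset[of _ "{t. f t \<noteq> 0}"])
      moreover have "{s. ?g s \<noteq> 0} \<subseteq> T" using f(2) by auto
      ultimately have "P ?g" using insert.IH by blast
      show "P f"
      proof (cases "f t = 0")
        case True
        then show ?thesis using \<open>P ?g\<close> by (simp add: fun_upd_idem)
      next
        case False
        then have "leaves t \<subseteq> S" using f(1) by (auto simp: FM_def)
        moreover have "f = vadd (vsmult (f t) (vtree t)) ?g"
          by (auto simp: vadd_def vsmult_def vtree_def)
        ultimately show ?thesis using step[OF _ g \<open>P ?g\<close>] by metis
      qed
    qed
  qed
  then show ?thesis using assms(1) by (auto simp: FM_def)
qed

lemma pideal_FM:
  assumes "R \<subseteq> FM S" shows "x \<in> pideal S R \<Longrightarrow> x \<in> FM S"
  by (induction rule: pideal.induct) (use assms in \<open>auto simp: jacobi_def\<close>)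

lemma pideal_vsub: "x \<in> pideal S R \<Longrightarrow> y \<in> pideal S R \<Longrightarrow> vsub x y \<in> pideal S R"
  unfolding vsub_conv_vadd by (intro pideal.add pideal.smult)

lemma pcls_self: "f \<in> FM S \<Longrightarrow> f \<in> pcls S R f"
  by (simp add: pcls_def pideal.zero)

lemma pcls_eq_iff:
  assumes "f \<in> FM S" "g \<in> FM S"
  shows "pcls S R f = pcls S R g \<longleftrightarrow> vsub f g \<in> pideal S R"
proof
  assume "pcls S R f = pcls S R g"
  then show "vsub f g \<in> pideal S R" using pcls_self[OF assms(1), of R] by (simp add: pcls_def)
next
  assume fg: "vsub f g \<in> pideal S R"
  have "vsub x f \<in> pideal S R \<longleftrightarrow> vsub x g \<in> pideal S R" for x
  proof
    assume "vsub x f \<in> pideal S R"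
    from pideal.add[OF this fg] show "vsub x g \<in> pideal S R"
      by (simp add: vsub_def vadd_def)
  next
    assume "vsub x g \<in> pideal S R"
    from pideal_vsub[OF this fg] show "vsub x f \<in> pideal S R"
      by (simp add: vsub_def)
  qed
  then show "pcls S R f = pcls S R g" by (auto simp: pcls_def)
qed

lemma prep_pcls:
  assumes "f \<in> FM S"
  shows "prep (pcls S R f) \<in> FM S" "vsub (prep (pcls S R f)) f \<in> pideal S R"
proof -
  have "prep (pcls S R f) \<in> pcls S R f"
    unfolding prep_def by (rule someI[of _ f]) (rule pcls_self[OF assms])
  then show "prep (pcls S R f) \<in> FM S" "vsub (prep (pcls S R f)) f \<in> pideal S R"
    by (auto simp: pcls_def)
qed

lemma padd_pcls:
  assumes "f \<in> FM S" "g \<in> FM S"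
  shows "padd S R (pcls S R f) (pcls S R g) = pcls S R (vadd f g)"
proof -
  let ?p = "prep (pcls S R f)" and ?q = "prep (pcls S R g)"
  have "vsub (vadd ?p ?q) (vadd f g) = vadd (vsub ?p f) (vsub ?q g)"
    by (auto simp: vsub_def vadd_def)
  also have "\<dots> \<in> pideal S R"
    by (intro pideal.add prep_pcls(2) assms)
  finally show ?thesis
    unfolding padd_def using assms by (subst pcls_eq_iff) (simp_all add: prep_pcls(1))
qed

lemma psmult_pcls:
  assumes "f \<in> FM S"
  shows "psmult S R c (pcls S R f) = pcls S R (vsmult c f)"
proof -
  let ?p = "prep (pcls S R f)"
  have "vsub (vsmult c ?p) (vsmult c f) = vsmult c (vsub ?p f)"
    by (auto simp: vsub_def vsmult_def algebra_simps)
  also have "\<dots> \<in> pideal S R"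
    by (intro pideal.smult prep_pcls(2) assms)
  finally show ?thesis
    unfolding psmult_def using assms by (subst pcls_eq_iff) (simp_all add: prep_pcls(1))
qed

lemma pbr_pcls:
  assumes "f \<in> FM S" "g \<in> FM S"
  shows "pbr S R (pcls S R f) (pcls S R g) = pcls S R (vbr f g)"
proof -
  let ?p = "prep (pcls S R f)" and ?q = "prep (pcls S R g)"
  have "vsub (vbr ?p ?q) (vbr f g) = vadd (vbr (vsub ?p f) ?q) (vbr f (vsub ?q g))"
    by (rule ext) (simp add: vsub_def vadd_def vbr_def algebra_simps split: mtree.split)
  also have "\<dots> \<in> pideal S R"
    by (intro pideal.add pideal.left pideal.right prep_pcls assms)
  finally show ?thesis
    unfolding pbr_def using assms by (subst pcls_eq_iff) (simp_all add: prep_pcls(1))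
qed

lemma pcarrier_cases:
  assumes "A \<in> pcarrier S R"
  obtains f where "f \<in> FM S" "A = pcls S R f"
  using assms unfolding pcarrier_def by blast

fun tsubst :: "('a \<Rightarrow> ('b,'k::field) fm) \<Rightarrow> 'a mtree \<Rightarrow> ('b,'k) fm" where
  "tsubst \<sigma> (Leaf x) = \<sigma> x"
| "tsubst \<sigma> (Node s t) = vbr (tsubst \<sigma> s) (tsubst \<sigma> t)"

definition vsubst :: "('a \<Rightarrow> ('b,'k::field) fm) \<Rightarrow> ('a,'k) fm \<Rightarrow> ('b,'k) fm" where
  "vsubst \<sigma> f = (\<lambda>u. \<Sum>t | f t \<noteq> 0. f t * tsubst \<sigma> t u)"

lemma vsubst_eq_sum:
  assumes "finite T" "{t. f t \<noteq> 0} \<subseteq> T"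
  shows "vsubst \<sigma> f = (\<lambda>u. \<Sum>t\<in>T. f t * tsubst \<sigma> t u)"
  unfolding vsubst_def by (rule ext, rule sum.mono_neutral_left) (use assms in auto)

lemma vsubst_vadd:
  assumes "f \<in> FM UNIV" "g \<in> FM UNIV"
  shows "vsubst \<sigma> (vadd f g) = vadd (vsubst \<sigma> f) (vsubst \<sigma> g)"
proof -
  let ?T = "{t. f t \<noteq> 0} \<union> {t. g t \<noteq> 0}"
  have T: "finite ?T" using assms by (simp add: FM_def)
  have "vsubst \<sigma> (vadd f g) = (\<lambda>u. \<Sum>t\<in>?T. vadd f g t * tsubst \<sigma> t u)"
    by (rule vsubst_eq_sum[OF T]) (auto simp: vadd_def)
  moreover have "vsubst \<sigma> f = (\<lambda>u. \<Sum>t\<in>?T. f t * tsubst \<sigma> t u)"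
    and "vsubst \<sigma> g = (\<lambda>u. \<Sum>t\<in>?T. g t * tsubst \<sigma> t u)"
    by (rule vsubst_eq_sum[OF T]; auto)+
  ultimately show ?thesis by (simp add: vadd_def distrib_right sum.distrib)
qed

lemma vsubst_vsmult:
  assumes "f \<in> FM UNIV"
  shows "vsubst \<sigma> (vsmult c f) = vsmult c (vsubst \<sigma> f)"
proof -
  let ?T = "{t. f t \<noteq> 0}"
  have T: "finite ?T" using assms by (simp add: FM_def)
  have "vsubst \<sigma> (vsmult c f) = (\<lambda>u. \<Sum>t\<in>?T. vsmult c f t * tsubst \<sigma> t u)"
    by (rule vsubst_eq_sum[OF T]) (auto simp: vsmult_def)
  then show ?thesis by (simp add: vsubst_def vsmult_def sum_distrib_left mult.assoc)
qed

lemma vsubst_vsub: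
  "f \<in> FM UNIV \<Longrightarrow> g \<in> FM UNIV \<Longrightarrow> vsubst \<sigma> (vsub f g) = vsub (vsubst \<sigma> f) (vsubst \<sigma> g)"
  by (simp add: vsub_conv_vadd vsubst_vadd vsubst_vsmult)

lemma vsubst_vzero [simp]: "vsubst \<sigma> vzero = vzero"
  by (simp add: vsubst_def vzero_def)

lemma vsubst_vtree [simp]: "vsubst \<sigma> (vtree t) = tsubst \<sigma> t"
proof -
  have "vsubst \<sigma> (vtree t) = (\<lambda>u. \<Sum>s\<in>{t}. vtree t s * tsubst \<sigma> s u)"
    by (rule vsubst_eq_sum) (auto simp: vtree_def)
  then show ?thesis by (simp add: vtree_def)
qed

lemma vsubst_vgen [simp]: "vsubst \<sigma> (vgen x) = \<sigma> x"
  by (simp add: vgen_vtree)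

lemma vsubst_vbr:
  assumes "f \<in> FM UNIV" "g \<in> FM UNIV"
  shows "vsubst \<sigma> (vbr f g) = vbr (vsubst \<sigma> f) (vsubst \<sigma> g)"
proof -
  have tree_left: "vsubst \<sigma> (vbr (vtree s) g) = vbr (tsubst \<sigma> s) (vsubst \<sigma> g)" for s
    using assms(2)
  proof (induction rule: FM_induct)
    case (step c t h)
    then show ?case
      by (simp add: vsubst_vadd vsubst_vsmult vbr_vadd_right vbr_vsmult_right vbr_vtree FM_vtree)
  qed simp
  from assms(1) show ?thesis
  proof (induction rule: FM_induct)
    case (step c t h)
    then show ?case using assms(2)
      by (simp add: vsubst_vadd vsubst_vsmult vbr_vadd_left vbr_vsmult_left tree_left FM_vtree)
  qed simp
qed

lemmas vsubst_simps = vsubst_vadd vsubst_vsmult vsubst_vsub vsubst_vbr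

lemma tsubst_FM: "\<sigma> ` S \<subseteq> FM S' \<Longrightarrow> leaves t \<subseteq> S \<Longrightarrow> tsubst \<sigma> t \<in> FM S'"
  by (induction t) auto

lemma vsubst_FM:
  assumes "\<sigma> ` S \<subseteq> FM S'" "f \<in> FM S"
  shows "vsubst \<sigma> f \<in> FM S'"
  using assms(2)
proof (induction rule: FM_induct)
  case (step c t g)
  then show ?case
    using tsubst_FM[OF assms(1) step(1)] by (simp add: vsubst_vadd vsubst_vsmult FM_vtree FM_UNIV_I)
qed simp

lemma vsubst_pideal:
  assumes R: "R \<subseteq> FM S" and \<sigma>: "\<sigma> ` S \<subseteq> FM S'"
    and rels: "\<And>r. r \<in> R \<Longrightarrow> vsubst \<sigma> r \<in> pideal S' R'"
  shows "x \<in> pideal S R \<Longrightarrow> vsubst \<sigma> x \<in> pideal S' R'"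
proof (induction rule: pideal.induct)
  case (jac a b c)
  then have "vsubst \<sigma> (jacobi a b c) = jacobi (vsubst \<sigma> a) (vsubst \<sigma> b) (vsubst \<sigma> c)"
    by (simp add: jacobi_def vsubst_vadd vsubst_vbr FM_UNIV_I)
  then show ?case using jac vsubst_FM[OF \<sigma>] by (simp add: pideal.jac)
qed (use rels vsubst_FM[OF \<sigma>] FM_UNIV_I[OF pideal_FM[OF R]] in
      \<open>auto simp: vsubst_simps FM_UNIV_I[of _ S] intro: pideal.intros\<close>)

definition phom ::
    "('a \<Rightarrow> ('b,'k::field) fm) \<Rightarrow> 'b set \<Rightarrow> ('b,'k) fm set \<Rightarrow> ('a,'k) fm set \<Rightarrow> ('b,'k) fm set"
  where "phom \<sigma> S' R' A = pcls S' R' (vsubst \<sigma> (prep A))"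

lemma phom_pcls:
  assumes R: "R \<subseteq> FM S" and \<sigma>: "\<sigma> ` S \<subseteq> FM S'"
    and rels: "\<And>r. r \<in> R \<Longrightarrow> vsubst \<sigma> r \<in> pideal S' R'" and f: "f \<in> FM S"
  shows "phom \<sigma> S' R' (pcls S R f) = pcls S' R' (vsubst \<sigma> f)"
proof -
  let ?p = "prep (pcls S R f)"
  have p: "?p \<in> FM S" "vsub ?p f \<in> pideal S R" using prep_pcls[OF f] by auto
  have "vsub (vsubst \<sigma> ?p) (vsubst \<sigma> f) = vsubst \<sigma> (vsub ?p f)"
    using p f by (simp add: vsubst_vsub FM_UNIV_I)
  also have "\<dots> \<in> pideal S' R'" by (rule vsubst_pideal[OF R \<sigma> rels p(2)])
  finally show ?thesis
    unfolding phom_def using vsubst_FM[OF \<sigma>] p f by (simp add: pcls_eq_iff)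
qed

lemma tsubst_inverse_mod:
  assumes \<sigma>: "\<sigma> ` S \<subseteq> FM S'" and \<tau>: "\<tau> ` S' \<subseteq> FM S"
    and inv: "\<And>x. x \<in> S \<Longrightarrow> vsub (vsubst \<tau> (\<sigma> x)) (vgen x) \<in> pideal S R"
  shows "leaves t \<subseteq> S \<Longrightarrow> vsub (vsubst \<tau> (tsubst \<sigma> t)) (vtree t) \<in> pideal S R"
proof (induction t)
  case (Leaf x)
  then show ?case using inv by (simp add: vgen_vtree)
next
  case (Node s r)
  let ?A = "vsubst \<tau> (tsubst \<sigma> s)" and ?B = "vsubst \<tau> (tsubst \<sigma> r)"
  have l: "leaves s \<subseteq> S" "leaves r \<subseteq> S" using Node.prems by auto
  have U: "tsubst \<sigma> s \<in> FM UNIV" "tsubst \<sigma> r \<in> FM UNIV"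
    using tsubst_FM[OF \<sigma>] l FM_UNIV_I by blast+
  have "vsub (vsubst \<tau> (tsubst \<sigma> (Node s r))) (vtree (Node s r))
      = vadd (vbr (vsub ?A (vtree s)) ?B) (vbr (vtree s) (vsub ?B (vtree r)))"
    using U by (simp add: vsubst_vbr vbr_vtree[symmetric])
      (rule ext, simp add: vsub_def vadd_def vbr_def algebra_simps split: mtree.split)
  also have "\<dots> \<in> pideal S R"
    using Node.IH l vsubst_FM[OF \<tau> tsubst_FM[OF \<sigma>]] FM_vtree
    by (intro pideal.add pideal.left pideal.right) auto
  finally show ?case .
qed

lemma vsubst_inverse_mod:
  assumes \<sigma>: "\<sigma> ` S \<subseteq> FM S'" and \<tau>: "\<tau> ` S' \<subseteq> FM S"
    and inv: "\<And>x. x \<in> S \<Longrightarrow> vsub (vsubst \<tau> (\<sigma> x)) (vgen x) \<in> pideal S R"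
  shows "f \<in> FM S \<Longrightarrow> vsub (vsubst \<tau> (vsubst \<sigma> f)) f \<in> pideal S R"
proof (induction rule: FM_induct)
  case zero
  then show ?case by (simp add: pideal.zero)
next
  case (step c t g)
  have "vsub (vsubst \<tau> (vsubst \<sigma> (vadd (vsmult c (vtree t)) g))) (vadd (vsmult c (vtree t)) g)
     = vadd (vsmult c (vsub (vsubst \<tau> (tsubst \<sigma> t)) (vtree t))) (vsub (vsubst \<tau> (vsubst \<sigma> g)) g)"
    using step FM_UNIV_I[OF tsubst_FM[OF \<sigma>]] FM_UNIV_I[OF vsubst_FM[OF \<sigma>]] FM_UNIV_I[of g]
    by (simp add: vsubst_vadd vsubst_vsmult FM_vtree)
      (auto simp: vsub_def vadd_def vsmult_def algebra_simps)
  also have "\<dots> \<in> pideal S R"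
    using tsubst_inverse_mod[OF \<sigma> \<tau> inv step(1)] step(3) by (intro pideal.add pideal.smult)
  finally show ?case .
qed

lemma plie_iso_phom:
  assumes R: "R \<subseteq> FM S" and R': "R' \<subseteq> FM S'"
    and \<sigma>: "\<sigma> ` S \<subseteq> FM S'" and \<tau>: "\<tau> ` S' \<subseteq> FM S"
    and rels: "\<And>r. r \<in> R \<Longrightarrow> vsubst \<sigma> r \<in> pideal S' R'"
    and rels': "\<And>r. r \<in> R' \<Longrightarrow> vsubst \<tau> r \<in> pideal S R"
    and inv: "\<And>x. x \<in> S \<Longrightarrow> vsub (vsubst \<tau> (\<sigma> x)) (vgen x) \<in> pideal S R"
    and inv': "\<And>x. x \<in> S' \<Longrightarrow> vsub (vsubst \<sigma> (\<tau> x)) (vgen x) \<in> pideal S' R'"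
  shows "plie_iso S R S' R' (phom \<sigma> S' R')"
proof -
  note H = phom_pcls[OF R \<sigma> rels] and H' = phom_pcls[OF R' \<tau> rels']
  have "bij_betw (phom \<sigma> S' R') (pcarrier S R) (pcarrier S' R')"
  proof (rule bij_betw_byWitness[where f' = "phom \<tau> S R"])
    show "\<forall>A\<in>pcarrier S R. phom \<tau> S R (phom \<sigma> S' R' A) = A"
      using vsubst_inverse_mod[OF \<sigma> \<tau> inv] vsubst_FM[OF \<sigma>] vsubst_FM[OF \<tau>]
      by (force elim!: pcarrier_cases simp: H H' pcls_eq_iff)
    show "\<forall>B\<in>pcarrier S' R'. phom \<sigma> S' R' (phom \<tau> S R B) = B"
      using vsubst_inverse_mod[OF \<tau> \<sigma> inv'] vsubst_FM[OF \<sigma>] vsubst_FM[OF \<tau>]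
      by (force elim!: pcarrier_cases simp: H H' pcls_eq_iff)
    show "phom \<sigma> S' R' ` pcarrier S R \<subseteq> pcarrier S' R'"
      using vsubst_FM[OF \<sigma>] by (auto elim!: pcarrier_cases simp: H pcarrier_def)
    show "phom \<tau> S R ` pcarrier S' R' \<subseteq> pcarrier S R"
      using vsubst_FM[OF \<tau>] by (auto elim!: pcarrier_cases simp: H' pcarrier_def)
  qed
  moreover have "\<forall>A\<in>pcarrier S R. \<forall>B\<in>pcarrier S R.
      phom \<sigma> S' R' (padd S R A B) = padd S' R' (phom \<sigma> S' R' A) (phom \<sigma> S' R' B)"
    using vsubst_FM[OF \<sigma>] by (auto elim!: pcarrier_cases simp: H padd_pcls vsubst_vadd FM_UNIV_I)
  moreover have "\<forall>c. \<forall>A\<in>pcarrier S R.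
      phom \<sigma> S' R' (psmult S R c A) = psmult S' R' c (phom \<sigma> S' R' A)"
    using vsubst_FM[OF \<sigma>] by (auto elim!: pcarrier_cases simp: H psmult_pcls vsubst_vsmult FM_UNIV_I)
  moreover have "\<forall>A\<in>pcarrier S R. \<forall>B\<in>pcarrier S R.
      phom \<sigma> S' R' (pbr S R A B) = pbr S' R' (phom \<sigma> S' R' A) (phom \<sigma> S' R' B)"
    using vsubst_FM[OF \<sigma>] by (auto elim!: pcarrier_cases simp: H pbr_pcls vsubst_vbr FM_UNIV_I)
  ultimately show ?thesis unfolding plie_iso_def by blast
qed

section \<open>Lie algebras\<close>

locale lie_alg =
  fixes sc :: "'k::field \<Rightarrow> 'v::ab_group_add \<Rightarrow> 'v" and br :: "'v \<Rightarrow> 'v \<Rightarrow> 'v"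
  assumes sc_add_left: "sc (s + t) x = sc s x + sc t x"
    and sc_add_right: "sc s (x + y) = sc s x + sc s y"
    and sc_sc: "sc s (sc t x) = sc (s * t) x"
    and sc_one: "sc 1 x = x"
    and br_add_left: "br (x + y) z = br x z + br y z"
    and br_add_right: "br x (y + z) = br x y + br x z"
    and br_sc_left: "br (sc s x) y = sc s (br x y)"
    and br_sc_right: "br x (sc s y) = sc s (br x y)"
    and br_alt: "br x x = 0"
    and jacobi: "br x (br y z) + br y (br z x) + br z (br x y) = 0"
begin

lemma sc_zero_left [simp]: "sc 0 x = 0"
  using sc_add_left[of 0 0 x] by simp

lemma sc_zero_right [simp]: "sc s 0 = 0"
  using sc_add_right[of s 0 0] by simp

lemma sc_minus_right: "sc s (- x) = - sc s x"
  using sc_add_right[of s x "- x"] by (simp add: minus_unique)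

lemma sc_minus_left: "sc (- s) x = - sc s x"
  using sc_add_left[of s "- s" x] by (simp add: minus_unique)

lemma sc_diff_right: "sc s (x - y) = sc s x - sc s y"
  by (simp only: diff_conv_add_uminus sc_add_right sc_minus_right)

lemma sc_diff_left: "sc (s - t) x = sc s x - sc t x"
  by (simp only: diff_conv_add_uminus sc_add_left sc_minus_left)

lemma br_zero_left [simp]: "br 0 x = 0"
  using br_add_left[of 0 0 x] by simp

lemma br_zero_right [simp]: "br x 0 = 0"
  using br_add_right[of x 0 0] by simp

lemma br_minus_left: "br (- x) y = - br x y"
  using br_add_left[of x "- x" y] by (simp add: minus_unique)

lemma br_minus_right: "br y (- x) = - br y x"
  using br_add_right[of y x "- x"] by (simp add: minus_unique)

lemma br_diff_left: "br (x - y) z = br x z - br y z"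
  by (simp only: diff_conv_add_uminus br_add_left br_minus_left)

lemma br_diff_right: "br z (x - y) = br z x - br z y"
  by (simp only: diff_conv_add_uminus br_add_right br_minus_right)

lemma br_anti: "br y x = - br x y"
proof -
  have "br x y + br y x = br x x + br x y + (br y x + br y y)" by (simp add: br_alt)
  also have "\<dots> = br (x + y) (x + y)" by (simp only: br_add_left br_add_right add_ac)
  finally have "br x y + br y x = 0" by (simp add: br_alt)
  then show ?thesis by (rule minus_unique[symmetric])
qed

lemma br_leibniz: "br x (br y z) = br (br x y) z + br y (br x z)"
proof -
  have "br x (br y z) + - br y (br x z) + - br (br x y) z = 0"
    using jacobi[of x y z] by (simp add: br_anti[of "br x y" z] br_anti[of z x] br_minus_right)
  then show ?thesis by (simp add: algebra_simps)
qed

lemmas lin_simps = sc_add_left sc_add_right sc_sc sc_one br_add_left br_add_right br_sc_left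
  br_sc_right sc_minus_right sc_minus_left sc_diff_right sc_diff_left br_minus_left br_minus_right
  br_diff_left br_diff_right

end

context lie_alg
begin

definition dolan_grady :: "'v \<Rightarrow> 'v \<Rightarrow> bool" where
  "dolan_grady A B \<longleftrightarrow> br A (br A (br A B)) = sc 4 (br A B)"

lemma dolan_grady_uminus [simp]:
  "dolan_grady (- A) B \<longleftrightarrow> dolan_grady A B" "dolan_grady A (- B) \<longleftrightarrow> dolan_grady A B"
  unfolding dolan_grady_def by (simp_all add: br_minus_left br_minus_right sc_minus_right)

lemma dolan_grady_double:
  assumes "br P (br P (br P Q)) = br P Q"
  shows "dolan_grady (sc 2 P) (sc 2 Q)"
  using assms unfolding dolan_grady_def by (simp add: br_sc_left br_sc_right sc_sc)

lemma dolan_grady_sum_diff: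
  assumes u: "u = br a w" and wau: "br w (br a u) = 0"
    and sum: "br a (br a u) + br w (br w u) = u"
  shows "dolan_grady (sc 2 (a - w)) (sc 2 (a + w))" "dolan_grady (sc 2 (a + w)) (sc 2 (a - w))"
proof -
  have wa: "br w a = - u" using u by (simp add: br_anti[of w a])
  have awu: "br a (br w u) = 0" using br_leibniz[of a w u] wau by (simp add: u[symmetric] br_alt)
  have wwu: "br w (br w u) = u - br a (br a u)" using sum by (simp add: algebra_simps)
  have "br (a - w) (a + w) = u + u"
    using wa by (simp add: br_add_right br_diff_left br_alt u[symmetric])
  moreover have "br (a - w) (br (a - w) (u + u)) = u + u"
    by (simp add: br_add_right br_diff_right br_diff_left awu wau wwu)
  ultimately have "br (a - w) (br (a - w) (br (a - w) (a + w))) = br (a - w) (a + w)"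
    by simp
  then show "dolan_grady (sc 2 (a - w)) (sc 2 (a + w))" by (rule dolan_grady_double)
  have "br (a + w) (a - w) = - (u + u)"
    using wa by (simp add: br_add_left br_diff_right br_alt u[symmetric])
  moreover have "br (a + w) (br (a + w) (- (u + u))) = - (u + u)"
    by (simp add: br_minus_right br_diff_right br_add_right br_add_left awu wau wwu)
  ultimately have "br (a + w) (br (a + w) (br (a + w) (a - w))) = br (a + w) (a - w)"
    by simp
  then show "dolan_grady (sc 2 (a + w)) (sc 2 (a - w))" by (rule dolan_grady_double)
qed

lemma dolan_grady_pair_br:
  assumes "dolan_grady P Q" "dolan_grady Q P"
  shows "br (br (P + Q) (br P Q)) (P - Q) = 0"
proof -
  define R where "R = br P Q"
  have PRP: "br (br P R) P = - sc 4 R"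
    using assms(1) unfolding dolan_grady_def R_def by (simp add: br_anti[of "br P (br P Q)" P])
  have "br (br Q R) Q = br Q (br Q (br Q P))"
    unfolding R_def by (simp add: br_anti[of _ Q] br_anti[of P Q] br_minus_right)
  then have QRQ: "br (br Q R) Q = - sc 4 R"
    using assms(2) unfolding dolan_grady_def R_def by (simp add: br_anti[of Q P] sc_minus_right)
  have "br (br Q R) P = br (br P R) Q"
    using br_leibniz[of P Q R]
    by (simp add: R_def[symmetric] br_alt br_anti[of _ P] br_anti[of "br P R" Q])
  then show ?thesis
    unfolding R_def[symmetric] by (simp add: br_add_left br_diff_right PRP QRQ)
qed

lemma ad3_br_ad_eq_0:
  assumes A: "A = sc s (P + Q)" and AB: "br A B = sc t (P - Q)"
    and "dolan_grady P Q" "dolan_grady Q P"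
  shows "br (br A (br A (br A B))) (br A B) = 0"
proof -
  define Y where "Y = br (P + Q) (br P Q)"
  have "br (P + Q) (P - Q) = - (br P Q + br P Q)"
    by (simp add: br_add_left br_diff_right br_alt br_anti[of Q P])
  then have "br A (br A (br A B)) = sc (s * (s * t)) (- (Y + Y))"
    unfolding AB unfolding A Y_def
    by (simp only: br_sc_left br_sc_right sc_sc br_minus_right br_add_right mult_ac
        sc_add_right[symmetric] sc_minus_right[symmetric])
  moreover have "br Y (P - Q) = 0"
    unfolding Y_def by (rule dolan_grady_pair_br[OF assms(3,4)])
  ultimately show ?thesis
    unfolding AB by (simp add: br_sc_left br_sc_right br_minus_left br_diff_left)
qed

end

section \<open>Tetrahedron families and f-triples\<close>

definition edge_table :: "('b \<Rightarrow> 'b) \<Rightarrow> 'b \<Rightarrow> 'b \<Rightarrow> 'b \<Rightarrow> 'b \<Rightarrow> 'b \<Rightarrow> 'b \<Rightarrow> 'b \<Rightarrow> nat \<Rightarrow> nat \<Rightarrow> 'b"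
  where "edge_table neg d x01 x23 x02 x31 x03 x12 i j =
    (if i = 0 \<and> j = 1 then x01 else if i = 1 \<and> j = 0 then neg x01
     else if i = 2 \<and> j = 3 then x23 else if i = 3 \<and> j = 2 then neg x23
     else if i = 0 \<and> j = 2 then x02 else if i = 2 \<and> j = 0 then neg x02
     else if i = 3 \<and> j = 1 then x31 else if i = 1 \<and> j = 3 then neg x31
     else if i = 0 \<and> j = 3 then x03 else if i = 3 \<and> j = 0 then neg x03
     else if i = 1 \<and> j = 2 then x12 else if i = 2 \<and> j = 1 then neg x12 else d)"

lemma less_4_cases: "(n::nat) < 4 \<Longrightarrow> n = 0 \<or> n = 1 \<or> n = 2 \<or> n = 3"
  by auto

lemma edge_table_anti:
  fixes x01 :: "'b::ab_group_add"
  assumes "i < 4" "j < 4" "i \<noteq> j"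
  shows "edge_table uminus 0 x01 x23 x02 x31 x03 x12 j i
    = - edge_table uminus 0 x01 x23 x02 x31 x03 x12 i j"
  using less_4_cases[OF assms(1)] less_4_cases[OF assms(2)] assms(3)
  by (elim disjE) (simp_all add: edge_table_def)

context lie_alg
begin

lemma dolan_grady_edge_table:
  assumes "dolan_grady x01 x23" "dolan_grady x23 x01" "dolan_grady x02 x31" "dolan_grady x31 x02"
    "dolan_grady x03 x12" "dolan_grady x12 x03"
    and "h < 4" "i < 4" "j < 4" "k < 4" "h \<noteq> i" "h \<noteq> j" "h \<noteq> k" "i \<noteq> j" "i \<noteq> k" "j \<noteq> k"
  shows "dolan_grady (edge_table uminus 0 x01 x23 x02 x31 x03 x12 h i)
    (edge_table uminus 0 x01 x23 x02 x31 x03 x12 j k)"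
  using less_4_cases[OF assms(7)] less_4_cases[OF assms(8)] less_4_cases[OF assms(9)]
    less_4_cases[OF assms(10)] assms(11-16)
  by (elim disjE) (simp_all add: edge_table_def assms(1-6))

definition X_of :: "(nat \<Rightarrow> 'v) \<Rightarrow> nat \<Rightarrow> nat \<Rightarrow> 'v" where
  "X_of z = edge_table uminus 0
     (sc 2 (z 2 - br (z 1) (z 2))) (sc 2 (z 2 + br (z 1) (z 2)))
     (sc 2 (z 0 - br (z 2) (z 0))) (sc 2 (z 0 + br (z 2) (z 0)))
     (sc 2 (z 1 - br (z 0) (z 1))) (sc 2 (z 1 + br (z 0) (z 1)))"

definition z_of :: "(nat \<Rightarrow> nat \<Rightarrow> 'v) \<Rightarrow> nat \<Rightarrow> 'v" where
  "z_of X n = sc (1/4)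
     (if n mod 3 = 0 then X 0 2 + X 3 1 else if n mod 3 = 1 then X 0 3 + X 1 2 else X 0 1 + X 2 3)"

lemma z_of_X_of:
  assumes "(2::'k) \<noteq> 0"
  shows "z_of (X_of z) n = z (n mod 3)"
proof -
  have "(4::'k) \<noteq> 0" using assms mult_eq_0_iff[of "2::'k" 2] by simp
  have "sc 2 (x - y) + sc 2 (x + y) = sc 4 x" for x y
    using sc_add_left[of 2 2 x] by (simp add: sc_diff_right sc_add_right algebra_simps)
  with \<open>4 \<noteq> 0\<close> have avg: "sc (1/4) (sc 2 (x - y) + sc 2 (x + y)) = x" for x y
    by (simp add: sc_sc sc_one)
  have "n mod 3 = 0 \<or> n mod 3 = 1 \<or> n mod 3 = 2" by arith
  then show ?thesis
    by (elim disjE) (simp_all add: z_of_def X_of_def edge_table_def avg)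
qed

end

locale tet_relations = lie_alg sc br for sc :: "'k::field \<Rightarrow> 'v::ab_group_add \<Rightarrow> 'v" and br +
  fixes X :: "nat \<Rightarrow> nat \<Rightarrow> 'v"
  assumes X_anti: "i < 4 \<Longrightarrow> j < 4 \<Longrightarrow> i \<noteq> j \<Longrightarrow> X j i = - X i j"
    and X_quadratic: "i < 4 \<Longrightarrow> j < 4 \<Longrightarrow> k < 4 \<Longrightarrow> i \<noteq> j \<Longrightarrow> j \<noteq> k \<Longrightarrow> i \<noteq> k \<Longrightarrow>
      br (X i j) (X j k) = sc 2 (X i j + X j k)"
    and X_dolan_grady: "h < 4 \<Longrightarrow> i < 4 \<Longrightarrow> j < 4 \<Longrightarrow> k < 4 \<Longrightarrow>
      h \<noteq> i \<Longrightarrow> h \<noteq> j \<Longrightarrow> h \<noteq> k \<Longrightarrow> i \<noteq> j \<Longrightarrow> i \<noteq> k \<Longrightarrow> j \<noteq> k \<Longrightarrow>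
      dolan_grady (X h i) (X j k)"

locale f_relations = lie_alg sc br for sc :: "'k::field \<Rightarrow> 'v::ab_group_add \<Rightarrow> 'v" and br +
  fixes z :: "nat \<Rightarrow> 'v"
  assumes z_periodic: "z (i + 3) = z i"
    and f_rel1: "br (br (z i) (z (i + 1))) (z (i + 2)) = 0"
    and f_rel2: "br (z i) (br (z i) (z (i + 1))) = z (i + 1) + br (z (i + 2)) (z i)"
    and f_rel3: "br (br (z (i + 1)) (br (z (i + 1)) (br (z (i + 1)) (z i)))) (br (z (i + 1)) (z i)) = 0"

(* Identities between brackets are verified by comparing coefficients with respect to nine
   fixed elements. *)

locale lie_coords = lie_alg sc br for sc :: "'k::field \<Rightarrow> 'v::ab_group_add \<Rightarrow> 'v" and br +
  fixes e0 e1 e2 e3 e4 e5 u0 u1 u2 :: 'v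
begin

definition comb :: "'k \<Rightarrow> 'k \<Rightarrow> 'k \<Rightarrow> 'k \<Rightarrow> 'k \<Rightarrow> 'k \<Rightarrow> 'k \<Rightarrow> 'k \<Rightarrow> 'k \<Rightarrow> 'v" where
  "comb c0 c1 c2 c3 c4 c5 c6 c7 c8 = sc c0 e0 + sc c1 e1 + sc c2 e2 + sc c3 e3 + sc c4 e4
     + sc c5 e5 + sc c6 u0 + sc c7 u1 + sc c8 u2"

lemma comb_add: "comb c0 c1 c2 c3 c4 c5 c6 c7 c8 + comb d0 d1 d2 d3 d4 d5 d6 d7 d8
    = comb (c0 + d0) (c1 + d1) (c2 + d2) (c3 + d3) (c4 + d4) (c5 + d5) (c6 + d6) (c7 + d7) (c8 + d8)"
  unfolding comb_def by (simp add: sc_add_left algebra_simps)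

lemma comb_diff: "comb c0 c1 c2 c3 c4 c5 c6 c7 c8 - comb d0 d1 d2 d3 d4 d5 d6 d7 d8
    = comb (c0 - d0) (c1 - d1) (c2 - d2) (c3 - d3) (c4 - d4) (c5 - d5) (c6 - d6) (c7 - d7) (c8 - d8)"
  unfolding comb_def by (simp add: sc_diff_left algebra_simps)

lemma comb_neg: "- comb c0 c1 c2 c3 c4 c5 c6 c7 c8
    = comb (- c0) (- c1) (- c2) (- c3) (- c4) (- c5) (- c6) (- c7) (- c8)"
  unfolding comb_def by (simp add: sc_minus_left algebra_simps)

lemma comb_sc: "sc t (comb c0 c1 c2 c3 c4 c5 c6 c7 c8)
    = comb (t * c0) (t * c1) (t * c2) (t * c3) (t * c4) (t * c5) (t * c6) (t * c7) (t * c8)"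
  unfolding comb_def by (simp add: sc_add_right sc_sc)

lemma comb_zero: "comb 0 0 0 0 0 0 0 0 0 = 0"
  unfolding comb_def by simp

lemma comb_eqI:
  "c0 = d0 \<Longrightarrow> c1 = d1 \<Longrightarrow> c2 = d2 \<Longrightarrow> c3 = d3 \<Longrightarrow> c4 = d4 \<Longrightarrow> c5 = d5 \<Longrightarrow>
    c6 = d6 \<Longrightarrow> c7 = d7 \<Longrightarrow> c8 = d8 \<Longrightarrow>
    comb c0 c1 c2 c3 c4 c5 c6 c7 c8 = comb d0 d1 d2 d3 d4 d5 d6 d7 d8"
  by simp

lemmas comb_simps = comb_add comb_diff comb_neg comb_sc

lemma comb_pair_sum_diff:
  "comb q q 0 0 0 0 0 0 0 = sc q (e0 + e1)" "comb q (- q) 0 0 0 0 0 0 0 = sc q (e0 - e1)"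
  "comb 0 0 q q 0 0 0 0 0 = sc q (e2 + e3)" "comb 0 0 q (- q) 0 0 0 0 0 = sc q (e2 - e3)"
  "comb 0 0 0 0 q q 0 0 0 = sc q (e4 + e5)" "comb 0 0 0 0 q (- q) 0 0 0 = sc q (e4 - e5)"
  by (simp_all add: comb_def sc_add_right sc_diff_right sc_minus_left)

lemma comb_basis:
  "comb 1 0 0 0 0 0 0 0 0 = e0" "comb 0 1 0 0 0 0 0 0 0 = e1" "comb 0 0 1 0 0 0 0 0 0 = e2"
  "comb 0 0 0 1 0 0 0 0 0 = e3" "comb 0 0 0 0 1 0 0 0 0 = e4" "comb 0 0 0 0 0 1 0 0 0 = e5"
  by (simp_all add: comb_def sc_one)

end

(* The bracket table of e0, ..., e5 = z1, z2, z0, [z1,z2], [z2,z0], [z0,z1] in a Lie algebra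
   satisfying the relations of f, see the sublocale declaration in f_relations. *)
locale f_basis = lie_coords +
  assumes f01: "br e0 e1 = e3" and f02: "br e0 e2 = - e5" and f03: "br e0 e3 = e1 + e5"
    and f04: "br e0 e4 = 0" and f05: "br e0 e5 = u0" and f12: "br e1 e2 = e4"
    and f13: "br e1 e3 = u1" and f14: "br e1 e4 = e2 + e3" and f15: "br e1 e5 = 0"
    and f23: "br e2 e3 = 0" and f24: "br e2 e4 = u2" and f25: "br e2 e5 = e0 + e4"
    and f34: "br e3 e4 = e1" and f35: "br e3 e5 = - e0" and f45: "br e4 e5 = e2"
begin

lemmas f_table = f01 f02 f03 f04 f05 f12 f13 f14 f15 f23 f24 f25 f34 f35 f45
  br_anti[of e1 e0, unfolded f01] br_anti[of e2 e0, unfolded f02]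
    br_anti[of e3 e0, unfolded f03] br_anti[of e4 e0, unfolded f04]
    br_anti[of e5 e0, unfolded f05] br_anti[of e2 e1, unfolded f12]
    br_anti[of e3 e1, unfolded f13] br_anti[of e4 e1, unfolded f14]
    br_anti[of e5 e1, unfolded f15] br_anti[of e3 e2, unfolded f23]
    br_anti[of e4 e2, unfolded f24] br_anti[of e5 e2, unfolded f25]
    br_anti[of e4 e3, unfolded f34] br_anti[of e5 e3, unfolded f35]
    br_anti[of e5 e4, unfolded f45]

lemma comb_br: "br (comb c0 c1 c2 c3 c4 c5 0 0 0) (comb d0 d1 d2 d3 d4 d5 0 0 0) =
  comb (c2 * d5 - c5 * d2 - (c3 * d5 - c5 * d3)) (c0 * d3 - c3 * d0 + (c3 * d4 - c4 * d3))
    (c1 * d4 - c4 * d1 + (c4 * d5 - c5 * d4)) (c0 * d1 - c1 * d0 + (c1 * d4 - c4 * d1))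
    (c1 * d2 - c2 * d1 + (c2 * d5 - c5 * d2)) (c0 * d3 - c3 * d0 - (c0 * d2 - c2 * d0))
    (c0 * d5 - c5 * d0) (c1 * d3 - c3 * d1) (c2 * d4 - c4 * d2)"
  unfolding comb_def
  by (simp add: lin_simps br_alt f_table algebra_simps)

lemma edge_table_comb_quadratic:
  defines "T \<equiv> edge_table uminus 0
    (comb 0 2 0 (-2) 0 0 0 0 0) (comb 0 2 0 2 0 0 0 0 0) (comb 0 0 2 0 (-2) 0 0 0 0)
    (comb 0 0 2 0 2 0 0 0 0) (comb 2 0 0 0 0 (-2) 0 0 0) (comb 2 0 0 0 0 2 0 0 0)"
  assumes ijk: "i < 4" "j < 4" "k < 4" "i \<noteq> j" "j \<noteq> k" "i \<noteq> k"
  shows "br (T i j) (T j k) = sc 2 (T i j + T j k)"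
  using less_4_cases[OF ijk(1)] less_4_cases[OF ijk(2)] less_4_cases[OF ijk(3)] ijk(4-6)
  by (elim disjE; simp only:; simp add: T_def edge_table_def comb_br comb_add comb_neg comb_sc)

end

(* The bracket table of e0, ..., e5 = X01, X23, X02, X31, X03, X12 in a Lie algebra satisfying
   the relations of the tetrahedron algebra; u0, u1, u2 are the brackets of opposite edges. *)
locale tet_basis = lie_coords +
  assumes t01: "br e0 e1 = u0" and t02: "br e0 e2 = sc 2 e0 - sc 2 e2"
    and t03: "br e0 e3 = sc 2 e3 - sc 2 e0" and t04: "br e0 e4 = sc 2 e0 - sc 2 e4"
    and t05: "br e0 e5 = sc 2 e0 + sc 2 e5" and t12: "br e1 e2 = - sc 2 e1 - sc 2 e2"
    and t13: "br e1 e3 = sc 2 e1 + sc 2 e3" and t14: "br e1 e4 = sc 2 e4 - sc 2 e1"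
    and t15: "br e1 e5 = - sc 2 e1 - sc 2 e5" and t23: "br e2 e3 = u1"
    and t24: "br e2 e4 = sc 2 e2 - sc 2 e4" and t25: "br e2 e5 = sc 2 e5 - sc 2 e2"
    and t34: "br e3 e4 = - sc 2 e3 - sc 2 e4" and t35: "br e3 e5 = sc 2 e3 + sc 2 e5"
    and t45: "br e4 e5 = u2"
begin

lemmas t_table = t01 t02 t03 t04 t05 t12 t13 t14 t15 t23 t24 t25 t34 t35 t45
  br_anti[of e1 e0, unfolded t01] br_anti[of e2 e0, unfolded t02]
    br_anti[of e3 e0, unfolded t03] br_anti[of e4 e0, unfolded t04]
    br_anti[of e5 e0, unfolded t05] br_anti[of e2 e1, unfolded t12]
    br_anti[of e3 e1, unfolded t13] br_anti[of e4 e1, unfolded t14]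
    br_anti[of e5 e1, unfolded t15] br_anti[of e3 e2, unfolded t23]
    br_anti[of e4 e2, unfolded t24] br_anti[of e5 e2, unfolded t25]
    br_anti[of e4 e3, unfolded t34] br_anti[of e5 e3, unfolded t35]
    br_anti[of e5 e4, unfolded t45]

lemma comb_br: "br (comb c0 c1 c2 c3 c4 c5 0 0 0) (comb d0 d1 d2 d3 d4 d5 0 0 0) =
  comb (2 * ((c0 * d2 - c2 * d0) - (c0 * d3 - c3 * d0) + (c0 * d4 - c4 * d0) + (c0 * d5 - c5 * d0)))
    (2 * (- (c1 * d2 - c2 * d1) + (c1 * d3 - c3 * d1) - (c1 * d4 - c4 * d1) - (c1 * d5 - c5 * d1)))
    (2 * (- (c0 * d2 - c2 * d0) - (c1 * d2 - c2 * d1) + (c2 * d4 - c4 * d2) - (c2 * d5 - c5 * d2)))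
    (2 * ((c0 * d3 - c3 * d0) + (c1 * d3 - c3 * d1) - (c3 * d4 - c4 * d3) + (c3 * d5 - c5 * d3)))
    (2 * (- (c0 * d4 - c4 * d0) + (c1 * d4 - c4 * d1) - (c2 * d4 - c4 * d2) - (c3 * d4 - c4 * d3)))
    (2 * ((c0 * d5 - c5 * d0) - (c1 * d5 - c5 * d1) + (c2 * d5 - c5 * d2) + (c3 * d5 - c5 * d3)))
    (c0 * d1 - c1 * d0) (c2 * d3 - c3 * d2) (c4 * d5 - c5 * d4)"
  unfolding comb_def
  by (simp add: lin_simps br_alt t_table algebra_simps)

lemma comb_f_identities:
  assumes "4 * q = 1"
  shows "br (br (comb 0 0 q q 0 0 0 0 0) (comb 0 0 0 0 q q 0 0 0)) (comb q q 0 0 0 0 0 0 0)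
      = comb 0 0 0 0 0 0 0 0 0"
    "br (br (comb 0 0 0 0 q q 0 0 0) (comb q q 0 0 0 0 0 0 0)) (comb 0 0 q q 0 0 0 0 0)
      = comb 0 0 0 0 0 0 0 0 0"
    "br (br (comb q q 0 0 0 0 0 0 0) (comb 0 0 q q 0 0 0 0 0)) (comb 0 0 0 0 q q 0 0 0)
      = comb 0 0 0 0 0 0 0 0 0"
    "br (comb 0 0 q q 0 0 0 0 0) (br (comb 0 0 q q 0 0 0 0 0) (comb 0 0 0 0 q q 0 0 0))
      = comb 0 0 0 0 q q 0 0 0 + br (comb q q 0 0 0 0 0 0 0) (comb 0 0 q q 0 0 0 0 0)"
    "br (comb 0 0 0 0 q q 0 0 0) (br (comb 0 0 0 0 q q 0 0 0) (comb q q 0 0 0 0 0 0 0))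
      = comb q q 0 0 0 0 0 0 0 + br (comb 0 0 q q 0 0 0 0 0) (comb 0 0 0 0 q q 0 0 0)"
    "br (comb q q 0 0 0 0 0 0 0) (br (comb q q 0 0 0 0 0 0 0) (comb 0 0 q q 0 0 0 0 0))
      = comb 0 0 q q 0 0 0 0 0 + br (comb 0 0 0 0 q q 0 0 0) (comb q q 0 0 0 0 0 0 0)"
    "br (comb 0 0 0 0 q q 0 0 0) (comb 0 0 q q 0 0 0 0 0) = comb 0 0 0 0 q (- q) 0 0 0"
    "br (comb q q 0 0 0 0 0 0 0) (comb 0 0 0 0 q q 0 0 0) = comb q (- q) 0 0 0 0 0 0 0"
    "br (comb 0 0 q q 0 0 0 0 0) (comb q q 0 0 0 0 0 0 0) = comb 0 0 q (- q) 0 0 0 0 0"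
    "sc 2 (comb q q 0 0 0 0 0 0 0 - br (comb 0 0 0 0 q q 0 0 0) (comb q q 0 0 0 0 0 0 0))
      = comb 1 0 0 0 0 0 0 0 0"
    "sc 2 (comb q q 0 0 0 0 0 0 0 + br (comb 0 0 0 0 q q 0 0 0) (comb q q 0 0 0 0 0 0 0))
      = comb 0 1 0 0 0 0 0 0 0"
    "sc 2 (comb 0 0 q q 0 0 0 0 0 - br (comb q q 0 0 0 0 0 0 0) (comb 0 0 q q 0 0 0 0 0))
      = comb 0 0 1 0 0 0 0 0 0"
    "sc 2 (comb 0 0 q q 0 0 0 0 0 + br (comb q q 0 0 0 0 0 0 0) (comb 0 0 q q 0 0 0 0 0))
      = comb 0 0 0 1 0 0 0 0 0"
    "sc 2 (comb 0 0 0 0 q q 0 0 0 - br (comb 0 0 q q 0 0 0 0 0) (comb 0 0 0 0 q q 0 0 0))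
      = comb 0 0 0 0 1 0 0 0 0"
    "sc 2 (comb 0 0 0 0 q q 0 0 0 + br (comb 0 0 q q 0 0 0 0 0) (comb 0 0 0 0 q q 0 0 0))
      = comb 0 0 0 0 0 1 0 0 0"
  using assms by (simp_all add: comb_br comb_simps) (rule comb_eqI; ((simp; fail) | algebra))+

end

context f_relations
begin

lemma z_mod: "z (n mod 3) = z n"
proof -
  have "z (r + 3 * q) = z r" for r q
  proof (induction q)
    case (Suc q)
    have "r + 3 * Suc q = r + 3 * q + 3" by simp
    then show ?case by (simp only: z_periodic Suc.IH)
  qed simp
  from this[of "n mod 3" "n div 3"] show ?thesis by simp
qed

lemma z_Suc3: "z (Suc (Suc (Suc i))) = z i"
  using z_periodic[of i] by (simp add: numeral_3_eq_3)

lemma f_rel_rotations: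
  "br (br (z (i + 1)) (z (i + 2))) (z i) = 0"
  "br (br (z (i + 2)) (z i)) (z (i + 1)) = 0"
  "br (z (i + 1)) (br (z (i + 1)) (z (i + 2))) = z (i + 2) + br (z i) (z (i + 1))"
  "br (z (i + 2)) (br (z (i + 2)) (z i)) = z i + br (z (i + 1)) (z (i + 2))"
  using f_rel1[of "i + 1"] f_rel1[of "i + 2"] f_rel2[of "i + 1"] f_rel2[of "i + 2"]
  by (simp_all add: z_Suc3)

lemma br_br_br_rotation: "br (br (z i) (z (i + 1))) (br (z (i + 2)) (z i)) = - z i"
proof -
  define x a y where "x = z i" and "a = z (i + 1)" and "y = z (i + 2)"
  have wy: "br (br x a) y = 0" and xw: "br x (br x a) = a + br y x"
    and yc: "br y (br y x) = x + br a y"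
    using f_rel1[of i] f_rel2[of i] f_rel_rotations(4)[of i] by (simp_all add: x_def a_def y_def)
  have "br (br x a) (br y x) = br (br (br x a) y) x + br y (br (br x a) x)" by (rule br_leibniz)
  also have "\<dots> = br y (- (a + br y x))" using wy xw by (simp add: br_anti[of "br x a" x])
  also have "\<dots> = - x"
    using yc by (simp add: br_minus_right br_diff_right br_add_right br_anti[of y a])
  finally show ?thesis by (simp add: x_def a_def y_def)
qed

lemma opposite_edges_ad_identities:
  fixes i :: nat
  defines "a \<equiv> z (i + 1)" and "w \<equiv> br (z i) (z (i + 1))"
  shows "br w (br a (br a w)) = 0" "br a (br a (br a w)) + br w (br w (br a w)) = br a w"
proof -
  define x c u where "x = z i" and "c = br (z (i + 2)) (z i)" and "u = br a w"
  have w: "w = br x a" by (simp add: w_def x_def a_def)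
  have ca: "br c a = 0" unfolding c_def a_def by (rule f_rel_rotations(2))
  have xw: "br x w = a + c" unfolding x_def w_def a_def c_def by (rule f_rel2)
  have wc: "br w c = - x" unfolding x_def w_def c_def by (rule br_br_br_rotation)
  have rel3: "br (br a (br a (br a x))) (br a x) = 0" unfolding x_def a_def by (rule f_rel3)
  have ax: "br a x = - w" using br_anti[of a x] w by simp
  have ac: "br a c = 0" using br_anti[of a c] ca by simp
  have cw: "br c w = x" using br_anti[of c w] wc by simp
  have xu: "br x u = 0"
    using br_leibniz[of x a w] xw ac by (simp add: u_def w[symmetric] br_alt br_add_right)
  have cu: "br c u = - w"
    using br_leibniz[of c a w] ca cw ax by (simp add: u_def)
  show wau: "br w (br a u) = 0"
    using rel3 br_anti[of w "br a u"] by (simp add: ax u_def br_minus_left br_minus_right)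
  have "0 = br x (br w (br a u))" using wau by simp
  also have "\<dots> = br (br x w) (br a u) + br w (br x (br a u))" by (rule br_leibniz)
  also have "br x (br a u) = br (br x a) u + br a (br x u)" by (rule br_leibniz)
  also have "\<dots> = br w u" using xu by (simp add: w)
  also have "br (br x w) (br a u) = br a (br a u) + br c (br a u)" using xw by (simp add: br_add_left)
  also have "br c (br a u) = br (br c a) u + br a (br c u)" by (rule br_leibniz)
  also have "\<dots> = - u" using ca cu by (simp add: br_minus_right u_def)
  finally show "br a (br a u) + br w (br w u) = u"
    by (simp add: algebra_simps eq_neg_iff_add_eq_0)
qed

lemma dolan_grady_opposite_edges:
  "dolan_grady (sc 2 (z (i + 1) - br (z i) (z (i + 1)))) (sc 2 (z (i + 1) + br (z i) (z (i + 1))))"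
  "dolan_grady (sc 2 (z (i + 1) + br (z i) (z (i + 1)))) (sc 2 (z (i + 1) - br (z i) (z (i + 1))))"
  using dolan_grady_sum_diff[OF refl opposite_edges_ad_identities[of i]] by simp_all

lemma nat_numeral_sums:
  "(0::nat) + 1 = 1" "(0::nat) + 2 = 2" "(1::nat) + 1 = 2" "(1::nat) + 2 = 3"
  "(2::nat) + 1 = 3" "(2::nat) + 2 = 4"
  by simp_all

lemma z_3_4: "z 3 = z 0" "z 4 = z 1"
  using z_periodic[of 0] z_periodic[of 1] by simp_all

lemma f_rels_012:
  "br (br (z 0) (z 1)) (z 2) = 0" "br (br (z 1) (z 2)) (z 0) = 0" "br (br (z 2) (z 0)) (z 1) = 0"
  "br (z 0) (br (z 0) (z 1)) = z 1 + br (z 2) (z 0)"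
  "br (z 1) (br (z 1) (z 2)) = z 2 + br (z 0) (z 1)"
  "br (z 2) (br (z 2) (z 0)) = z 0 + br (z 1) (z 2)"
  "br (br (z 0) (z 1)) (br (z 2) (z 0)) = - z 0"
  "br (br (z 1) (z 2)) (br (z 0) (z 1)) = - z 1"
  "br (br (z 2) (z 0)) (br (z 1) (z 2)) = - z 2"
  using f_rel1[of 0] f_rel_rotations[of 0] f_rel2[of 0] br_br_br_rotation[of 0]
    br_br_br_rotation[of 1] br_br_br_rotation[of 2]
  by (simp_all only: nat_numeral_sums z_3_4)

(* The simplifier rewrites the numeral 1 :: nat to Suc 0 (One_nat_def), which breaks matching
   against instantiated locale parameters such as z 1 and X 0 1; proofs involving them therefore
   remove One_nat_def from the simpset. *)

sublocale f_basis sc br "z 1" "z 2" "z 0" "br (z 1) (z 2)" "br (z 2) (z 0)" "br (z 0) (z 1)"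
  "br (z 1) (br (z 0) (z 1))" "br (z 2) (br (z 1) (z 2))" "br (z 0) (br (z 2) (z 0))"
  by unfold_locales
    (simp_all del: One_nat_def add: f_rels_012 br_anti[of "z 1" "z 0"] br_anti[of "z 1" "br (z 2) (z 0)"]
      br_anti[of "z 2" "br (z 0) (z 1)"] br_anti[of "z 0" "br (z 1) (z 2)"]
      br_anti[of "br (z 1) (z 2)" "br (z 2) (z 0)"] br_anti[of "br (z 2) (z 0)" "br (z 0) (z 1)"])

lemma X_of_comb: "X_of z = edge_table uminus 0
    (comb 0 2 0 (-2) 0 0 0 0 0) (comb 0 2 0 2 0 0 0 0 0) (comb 0 0 2 0 (-2) 0 0 0 0)
    (comb 0 0 2 0 2 0 0 0 0) (comb 2 0 0 0 0 (-2) 0 0 0) (comb 2 0 0 0 0 2 0 0 0)"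
  by (simp del: One_nat_def add: X_of_def comb_def sc_diff_right sc_add_right sc_minus_left)

theorem tet_relations_X_of: "tet_relations sc br (X_of z)"
proof
  show "X_of z j i = - X_of z i j" if "i < 4" "j < 4" "i \<noteq> j" for i j
    unfolding X_of_def using that by (rule edge_table_anti)
  show "br (X_of z i j) (X_of z j k) = sc 2 (X_of z i j + X_of z j k)"
    if "i < 4" "j < 4" "k < 4" "i \<noteq> j" "j \<noteq> k" "i \<noteq> k" for i j k
    unfolding X_of_comb using that by (rule edge_table_comb_quadratic)
  show "dolan_grady (X_of z h i) (X_of z j k)"
    if "h < 4" "i < 4" "j < 4" "k < 4" "h \<noteq> i" "h \<noteq> j" "h \<noteq> k" "i \<noteq> j" "i \<noteq> k" "j \<noteq> k"
    for h i j k
    unfolding X_of_def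
    using dolan_grady_opposite_edges[of 0] dolan_grady_opposite_edges[of 1]
      dolan_grady_opposite_edges[of 2]
    by (intro dolan_grady_edge_table that) (simp_all only: nat_numeral_sums z_3_4)
qed

end

context tet_relations
begin

lemma X_quadratic_variants:
  assumes "i < 4" "j < 4" "k < 4" "i \<noteq> j" "j \<noteq> k" "i \<noteq> k"
  shows "br (X i j) (X i k) = sc 2 (X i j - X i k)"
    "br (X i k) (X j k) = sc 2 (X j k - X i k)"
    "br (X i j) (X k i) = - sc 2 (X k i + X i j)"
proof -
  have "br (X i j) (X i k) = - br (X j i) (X i k)"
    using X_anti[of i j] assms by (simp add: br_minus_left)
  also have "\<dots> = sc 2 (X i j - X i k)"
    using X_quadratic[of j i k] X_anti[of i j] assms
    by (simp add: sc_add_right sc_diff_right sc_minus_right)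
  finally show "br (X i j) (X i k) = sc 2 (X i j - X i k)" .
  have "br (X i k) (X j k) = - br (X i k) (X k j)"
    using X_anti[of j k] assms by (simp add: br_minus_right)
  also have "\<dots> = sc 2 (X j k - X i k)"
    using X_quadratic[of i k j] X_anti[of j k] assms
    by (simp add: sc_add_right sc_diff_right sc_minus_right)
  finally show "br (X i k) (X j k) = sc 2 (X j k - X i k)" .
  show "br (X i j) (X k i) = - sc 2 (X k i + X i j)"
    using X_quadratic[of k i j] br_anti[of "X i j" "X k i"] assms by simp
qed

sublocale tet_basis sc br "X 0 1" "X 2 3" "X 0 2" "X 3 1" "X 0 3" "X 1 2"
  "br (X 0 1) (X 2 3)" "br (X 0 2) (X 3 1)" "br (X 0 3) (X 1 2)"
  by unfold_locales
    (simp_all del: One_nat_def add: X_quadratic X_quadratic_variants lin_simps algebra_simps)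

lemma edge_table_X:
  assumes "i < 4" "j < 4" "i \<noteq> j"
  shows "edge_table uminus 0 (X 0 1) (X 2 3) (X 0 2) (X 3 1) (X 0 3) (X 1 2) i j = X i j"
  using less_4_cases[OF assms(1)] less_4_cases[OF assms(2)] assms(3)
  by (elim disjE) (simp_all del: One_nat_def add: edge_table_def
      X_anti[of 0 1] X_anti[of 2 3] X_anti[of 0 2] X_anti[of 3 1] X_anti[of 0 3] X_anti[of 1 2])

lemma z_of_comb:
  "z_of X n = (if n mod 3 = 0 then comb 0 0 (1/4) (1/4) 0 0 0 0 0
    else if n mod 3 = 1 then comb 0 0 0 0 (1/4) (1/4) 0 0 0 else comb (1/4) (1/4) 0 0 0 0 0 0 0)"
  unfolding z_of_def comb_def by (simp add: sc_add_right)

lemma z_of_rotations: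
  fixes i :: nat
  defines "q \<equiv> 1/4 :: 'k"
  obtains "z_of X i = comb 0 0 q q 0 0 0 0 0" "z_of X (i + 1) = comb 0 0 0 0 q q 0 0 0"
      "z_of X (i + 2) = comb q q 0 0 0 0 0 0 0"
    | "z_of X i = comb 0 0 0 0 q q 0 0 0" "z_of X (i + 1) = comb q q 0 0 0 0 0 0 0"
      "z_of X (i + 2) = comb 0 0 q q 0 0 0 0 0"
    | "z_of X i = comb q q 0 0 0 0 0 0 0" "z_of X (i + 1) = comb 0 0 q q 0 0 0 0 0"
      "z_of X (i + 2) = comb 0 0 0 0 q q 0 0 0"
proof -
  have "(i + 1) mod 3 = (i mod 3 + 1) mod 3" "(i + 2) mod 3 = (i mod 3 + 2) mod 3"
    by presburger+
  moreover have "i mod 3 = 0 \<or> i mod 3 = 1 \<or> i mod 3 = 2" by arith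
  ultimately show thesis
    using that unfolding z_of_comb q_def by (elim disjE) (simp_all del: One_nat_def)
qed

theorem f_relations_z_of:
  assumes "(2::'k) \<noteq> 0"
  shows "f_relations sc br (z_of X)"
proof
  have "(4::'k) \<noteq> 0" using assms mult_eq_0_iff[of "2::'k" 2] by simp
  then have q: "4 * (1/4 :: 'k) = 1" by simp
  note rels = comb_f_identities[OF q]
  show "z_of X (i + 3) = z_of X i" for i
    by (simp add: z_of_def)
  show "br (br (z_of X i) (z_of X (i + 1))) (z_of X (i + 2)) = 0" for i
    by (cases i rule: z_of_rotations) (simp_all only: rels comb_zero)
  show "br (z_of X i) (br (z_of X i) (z_of X (i + 1)))
      = z_of X (i + 1) + br (z_of X (i + 2)) (z_of X i)" for i by (cases i rule: z_of_rotations) (simp_all only: rels)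
  have DG: "dolan_grady (X 0 1) (X 2 3)" "dolan_grady (X 2 3) (X 0 1)"
    "dolan_grady (X 0 2) (X 3 1)" "dolan_grady (X 3 1) (X 0 2)"
    "dolan_grady (X 0 3) (X 1 2)" "dolan_grady (X 1 2) (X 0 3)"
    by (rule X_dolan_grady; simp)+
  note ad3 = ad3_br_ad_eq_0[OF comb_pair_sum_diff(5) trans[OF rels(7) comb_pair_sum_diff(6)] DG(5,6)]
    ad3_br_ad_eq_0[OF comb_pair_sum_diff(1) trans[OF rels(8) comb_pair_sum_diff(2)] DG(1,2)]
    ad3_br_ad_eq_0[OF comb_pair_sum_diff(3) trans[OF rels(9) comb_pair_sum_diff(4)] DG(3,4)]
  show "br (br (z_of X (i + 1)) (br (z_of X (i + 1)) (br (z_of X (i + 1)) (z_of X i))))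
      (br (z_of X (i + 1)) (z_of X i)) = 0" for i
    by (cases i rule: z_of_rotations) (simp_all only: ad3)
qed

lemma X_of_z_of:
  assumes "(2::'k) \<noteq> 0"
  shows "X_of (z_of X) = edge_table uminus 0 (X 0 1) (X 2 3) (X 0 2) (X 3 1) (X 0 3) (X 1 2)"
proof -
  have "(4::'k) \<noteq> 0" using assms mult_eq_0_iff[of "2::'k" 2] by simp
  then have q: "4 * (1/4 :: 'k) = 1" by simp
  show ?thesis
    unfolding X_of_def by (simp del: One_nat_def add: z_of_comb comb_f_identities[OF q] comb_basis)
qed

end

section \<open>The presented algebras as types\<close>

locale presented_type =
  fixes S :: "'a set" and R :: "('a,'k::field) fm set"
    and Rep :: "'t \<Rightarrow> ('a,'k) fm set" and Abs :: "('a,'k) fm set \<Rightarrow> 't"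
  assumes R_FM: "R \<subseteq> FM S" and td: "type_definition Rep Abs (pcarrier S R)"
begin

definition emb :: "('a,'k) fm \<Rightarrow> 't" where "emb f = Abs (pcls S R f)"
definition qadd :: "'t \<Rightarrow> 't \<Rightarrow> 't" where "qadd x y = Abs (padd S R (Rep x) (Rep y))"
definition qsc :: "'k \<Rightarrow> 't \<Rightarrow> 't" where "qsc c x = Abs (psmult S R c (Rep x))"
definition qbr :: "'t \<Rightarrow> 't \<Rightarrow> 't" where "qbr x y = Abs (pbr S R (Rep x) (Rep y))"

lemma Rep_emb: "f \<in> FM S \<Longrightarrow> Rep (emb f) = pcls S R f"
  unfolding emb_def by (rule type_definition.Abs_inverse[OF td]) (auto simp: pcarrier_def)

lemma emb_cases:
  obtains f where "f \<in> FM S" "x = emb f"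
proof -
  obtain f where "f \<in> FM S" "Rep x = pcls S R f"
    using type_definition.Rep[OF td, of x] by (auto simp: pcarrier_def)
  then show thesis
    using that type_definition.Rep_inverse[OF td, of x] by (auto simp: emb_def)
qed

lemma emb_eq_iff: "f \<in> FM S \<Longrightarrow> g \<in> FM S \<Longrightarrow> emb f = emb g \<longleftrightarrow> vsub f g \<in> pideal S R"
  unfolding emb_def
  by (subst type_definition.Abs_inject[OF td]) (auto simp: pcarrier_def pcls_eq_iff)

lemma emb_eq_vzero_iff: "f \<in> FM S \<Longrightarrow> emb f = emb vzero \<longleftrightarrow> f \<in> pideal S R"
  by (simp add: emb_eq_iff)

lemma emb_rel: "r \<in> R \<Longrightarrow> emb r = emb vzero"
  using R_FM by (subst emb_eq_vzero_iff) (auto intro: pideal.rel)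

lemma emb_vadd: "f \<in> FM S \<Longrightarrow> g \<in> FM S \<Longrightarrow> emb (vadd f g) = qadd (emb f) (emb g)"
  by (simp add: qadd_def Rep_emb padd_pcls emb_def[symmetric])

lemma emb_vsmult: "f \<in> FM S \<Longrightarrow> emb (vsmult c f) = qsc c (emb f)"
  by (simp add: qsc_def Rep_emb psmult_pcls emb_def[symmetric])

lemma emb_vbr: "f \<in> FM S \<Longrightarrow> g \<in> FM S \<Longrightarrow> emb (vbr f g) = qbr (emb f) (emb g)"
  by (simp add: qbr_def Rep_emb pbr_pcls emb_def[symmetric])

lemma emb_vsub: "f \<in> FM S \<Longrightarrow> g \<in> FM S \<Longrightarrow> emb (vsub f g) = qadd (emb f) (qsc (-1) (emb g))"
  by (simp add: vsub_conv_vadd emb_vadd emb_vsmult)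

lemmas emb_hom = emb_vadd[symmetric] emb_vsmult[symmetric] emb_vbr[symmetric]

lemma qadd_assoc: "qadd (qadd x y) z = qadd x (qadd y z)"
  by (cases x rule: emb_cases, cases y rule: emb_cases, cases z rule: emb_cases)
    (simp add: emb_hom vadd_assoc)

lemma qadd_commute: "qadd x y = qadd y x"
  by (cases x rule: emb_cases, cases y rule: emb_cases) (simp add: emb_hom vadd_commute)

lemma qadd_zero_left: "qadd (emb vzero) x = x"
  by (cases x rule: emb_cases) (simp add: emb_hom vadd_vzero_left)

lemma qadd_neg_left: "qadd (qsc (-1) x) x = emb vzero"
  by (cases x rule: emb_cases) (simp add: emb_hom vadd_neg_left)

lemma qsc_add_left: "qsc (s + t) x = qadd (qsc s x) (qsc t x)"
  by (cases x rule: emb_cases) (simp add: emb_hom vsmult_add_left)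

lemma qsc_add_right: "qsc s (qadd x y) = qadd (qsc s x) (qsc s y)"
  by (cases x rule: emb_cases, cases y rule: emb_cases) (simp add: emb_hom vsmult_vadd)

lemma qsc_qsc: "qsc s (qsc t x) = qsc (s * t) x"
  by (cases x rule: emb_cases) (simp add: emb_hom vsmult_vsmult)

lemma qsc_one: "qsc 1 x = x"
  by (cases x rule: emb_cases) (simp add: emb_hom vsmult_one)

lemma qbr_add_left: "qbr (qadd x y) z = qadd (qbr x z) (qbr y z)"
  by (cases x rule: emb_cases, cases y rule: emb_cases, cases z rule: emb_cases)
    (simp add: emb_hom vbr_vadd_left)

lemma qbr_add_right: "qbr x (qadd y z) = qadd (qbr x y) (qbr x z)"
  by (cases x rule: emb_cases, cases y rule: emb_cases, cases z rule: emb_cases)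
    (simp add: emb_hom vbr_vadd_right)

lemma qbr_sc_left: "qbr (qsc s x) y = qsc s (qbr x y)"
  by (cases x rule: emb_cases, cases y rule: emb_cases) (simp add: emb_hom vbr_vsmult_left)

lemma qbr_sc_right: "qbr x (qsc s y) = qsc s (qbr x y)"
  by (cases x rule: emb_cases, cases y rule: emb_cases) (simp add: emb_hom vbr_vsmult_right)

lemma qbr_alt: "qbr x x = emb vzero"
  by (cases x rule: emb_cases) (simp add: emb_hom emb_eq_vzero_iff pideal.alt)

lemma qjacobi: "qadd (qadd (qbr x (qbr y z)) (qbr y (qbr z x))) (qbr z (qbr x y)) = emb vzero"
proof -
  obtain f g h where "f \<in> FM S" "g \<in> FM S" "h \<in> FM S" "x = emb f" "y = emb g" "z = emb h"
    by (metis emb_cases)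
  moreover have "vadd (vadd (vbr f (vbr g h)) (vbr g (vbr h f))) (vbr h (vbr f g)) = jacobi f g h"
    by (simp add: jacobi_def vadd_assoc)
  moreover have "jacobi f g h \<in> FM S" using calculation by (simp add: jacobi_def)
  ultimately show ?thesis
    by (simp add: emb_hom emb_eq_vzero_iff pideal.jac)
qed

end

lemma less_3_in_f_S: "n < 3 \<Longrightarrow> n \<in> f_S"
  by (auto simp: f_S_def)

lemma mod_3_in_f_S [simp]: "n mod 3 \<in> f_S"
  by (simp add: less_3_in_f_S)

lemma FM_fz [simp]: "fz n \<in> FM f_S"
  by (simp add: fz_def)

lemma FM_tX [simp]: "i < 4 \<Longrightarrow> j < 4 \<Longrightarrow> i \<noteq> j \<Longrightarrow> tX i j \<in> FM tet_S"
  by (simp add: tX_def tet_S_def)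

lemma f_R_FM: "f_R \<subseteq> FM f_S"
  unfolding f_R_def by auto

lemma tet_R_FM: "tet_R \<subseteq> FM tet_S"
  unfolding tet_R_def by auto

lemma tet_R_cases [consumes 1, case_names anti quadratic cubic]:
  assumes "r \<in> tet_R"
  obtains (anti) i j where "r = vadd (tX i j) (tX j i)" "i < 4" "j < 4" "i \<noteq> j"
  | (quadratic) i j k where "r = vsub (vbr (tX i j) (tX j k)) (vsmult 2 (vadd (tX i j) (tX j k)))"
      "i < 4" "j < 4" "k < 4" "i \<noteq> j" "j \<noteq> k" "i \<noteq> k"
  | (cubic) h i j k where
      "r = vsub (vbr (tX h i) (vbr (tX h i) (vbr (tX h i) (tX j k)))) (vsmult 4 (vbr (tX h i) (tX j k)))"
      "h < 4" "i < 4" "j < 4" "k < 4" "h \<noteq> i" "h \<noteq> j" "h \<noteq> k" "i \<noteq> j" "i \<noteq> k" "j \<noteq> k"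
  using assms unfolding tet_R_def by blast

lemma f_R_cases [consumes 1, case_names rel1 rel2 rel3]:
  assumes "r \<in> f_R"
  obtains (rel1) i where "r = vbr (vbr (fz i) (fz (i + 1))) (fz (i + 2))" "i < 3"
  | (rel2) i where
      "r = vsub (vbr (fz i) (vbr (fz i) (fz (i + 1)))) (vadd (fz (i + 1)) (vbr (fz (i + 2)) (fz i)))"
      "i < 3"
  | (rel3) i where
      "r = vbr (vbr (fz (i + 1)) (vbr (fz (i + 1)) (vbr (fz (i + 1)) (fz i)))) (vbr (fz (i + 1)) (fz i))"
      "i < 3"
  using assms unfolding f_R_def by blast

lemma fz_mod: "fz (i mod 3 + k) = fz (i + k)"
  by (simp add: fz_def mod_add_left_eq)

lemma f_R_rotations:
  "vbr (vbr (fz i) (fz (i + 1))) (fz (i + 2)) \<in> f_R"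
  "vsub (vbr (fz i) (vbr (fz i) (fz (i + 1)))) (vadd (fz (i + 1)) (vbr (fz (i + 2)) (fz i))) \<in> f_R"
  "vbr (vbr (fz (i + 1)) (vbr (fz (i + 1)) (vbr (fz (i + 1)) (fz i)))) (vbr (fz (i + 1)) (fz i)) \<in> f_R"
  using mod_less_divisor[of 3 i, OF zero_less_numeral]
  unfolding f_R_def fz_mod[of i 0, simplified, symmetric] fz_mod[of i 1, symmetric]
    fz_mod[of i 2, symmetric]
  by blast+

typedef (overloaded) 'k f_lie = "pcarrier f_S (f_R :: (nat,'k::field) fm set)"
  unfolding pcarrier_def using FM_vzero by blast

typedef (overloaded) 'k tet_lie = "pcarrier tet_S (tet_R :: (nat \<times> nat,'k::field) fm set)"
  unfolding pcarrier_def using FM_vzero by blast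

interpretation Fp: presented_type f_S "f_R :: (nat,'k::field) fm set" Rep_f_lie Abs_f_lie
  by (rule presented_type.intro[OF f_R_FM type_definition_f_lie])

interpretation Tp: presented_type tet_S "tet_R :: (nat \<times> nat,'k::field) fm set" Rep_tet_lie Abs_tet_lie
  by (rule presented_type.intro[OF tet_R_FM type_definition_tet_lie])

instantiation f_lie :: (field) ab_group_add
begin
definition zero_f_lie :: "'a f_lie" where "zero_f_lie = Fp.emb vzero"
definition plus_f_lie :: "'a f_lie \<Rightarrow> 'a f_lie \<Rightarrow> 'a f_lie" where "plus_f_lie x y = Fp.qadd x y"
definition uminus_f_lie :: "'a f_lie \<Rightarrow> 'a f_lie" where "uminus_f_lie x = Fp.qsc (-1) x"
definition minus_f_lie :: "'a f_lie \<Rightarrow> 'a f_lie \<Rightarrow> 'a f_lie"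
  where "minus_f_lie x y = Fp.qadd x (Fp.qsc (-1) y)"
instance
proof
  fix x y z :: "'a f_lie"
  show "x + y + z = x + (y + z)" by (simp add: plus_f_lie_def Fp.qadd_assoc)
  show "x + y = y + x" by (simp add: plus_f_lie_def Fp.qadd_commute)
  show "0 + x = x" by (simp add: plus_f_lie_def zero_f_lie_def Fp.qadd_zero_left)
  show "- x + x = 0" by (simp add: plus_f_lie_def zero_f_lie_def uminus_f_lie_def Fp.qadd_neg_left)
  show "x - y = x + - y" by (simp add: plus_f_lie_def minus_f_lie_def uminus_f_lie_def)
qed
end

instantiation tet_lie :: (field) ab_group_add
begin
definition zero_tet_lie :: "'a tet_lie" where "zero_tet_lie = Tp.emb vzero"
definition plus_tet_lie :: "'a tet_lie \<Rightarrow> 'a tet_lie \<Rightarrow> 'a tet_lie" where "plus_tet_lie x y = Tp.qadd x y"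
definition uminus_tet_lie :: "'a tet_lie \<Rightarrow> 'a tet_lie" where "uminus_tet_lie x = Tp.qsc (-1) x"
definition minus_tet_lie :: "'a tet_lie \<Rightarrow> 'a tet_lie \<Rightarrow> 'a tet_lie"
  where "minus_tet_lie x y = Tp.qadd x (Tp.qsc (-1) y)"
instance
proof
  fix x y z :: "'a tet_lie"
  show "x + y + z = x + (y + z)" by (simp add: plus_tet_lie_def Tp.qadd_assoc)
  show "x + y = y + x" by (simp add: plus_tet_lie_def Tp.qadd_commute)
  show "0 + x = x" by (simp add: plus_tet_lie_def zero_tet_lie_def Tp.qadd_zero_left)
  show "- x + x = 0" by (simp add: plus_tet_lie_def zero_tet_lie_def uminus_tet_lie_def Tp.qadd_neg_left)
  show "x - y = x + - y" by (simp add: plus_tet_lie_def minus_tet_lie_def uminus_tet_lie_def)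
qed
end

lemmas f_lie_ops = zero_f_lie_def plus_f_lie_def uminus_f_lie_def minus_f_lie_def
lemmas tet_lie_ops = zero_tet_lie_def plus_tet_lie_def uminus_tet_lie_def minus_tet_lie_def

interpretation F: lie_alg "Fp.qsc :: 'k::field \<Rightarrow> 'k f_lie \<Rightarrow> 'k f_lie" Fp.qbr
  by unfold_locales (simp_all add: f_lie_ops Fp.qsc_add_left Fp.qsc_add_right Fp.qsc_qsc
      Fp.qsc_one Fp.qbr_add_left Fp.qbr_add_right Fp.qbr_sc_left Fp.qbr_sc_right Fp.qbr_alt Fp.qjacobi)

interpretation T: lie_alg "Tp.qsc :: 'k::field \<Rightarrow> 'k tet_lie \<Rightarrow> 'k tet_lie" Tp.qbr
  by unfold_locales (simp_all add: tet_lie_ops Tp.qsc_add_left Tp.qsc_add_right Tp.qsc_qsc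
      Tp.qsc_one Tp.qbr_add_left Tp.qbr_add_right Tp.qbr_sc_left Tp.qbr_sc_right Tp.qbr_alt Tp.qjacobi)

lemma F_emb_simps:
  fixes f g :: "(nat,'k::field) fm"
  shows "f \<in> FM f_S \<Longrightarrow> g \<in> FM f_S \<Longrightarrow> (Fp.emb (vadd f g) :: 'k f_lie) = Fp.emb f + Fp.emb g"
    "f \<in> FM f_S \<Longrightarrow> g \<in> FM f_S \<Longrightarrow> (Fp.emb (vsub f g) :: 'k f_lie) = Fp.emb f - Fp.emb g"
    "f \<in> FM f_S \<Longrightarrow> (Fp.emb (vsmult c f) :: 'k f_lie) = Fp.qsc c (Fp.emb f)"
    "f \<in> FM f_S \<Longrightarrow> g \<in> FM f_S \<Longrightarrow> (Fp.emb (vbr f g) :: 'k f_lie) = Fp.qbr (Fp.emb f) (Fp.emb g)"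
  by (simp_all add: f_lie_ops Fp.emb_vadd Fp.emb_vsub Fp.emb_vsmult Fp.emb_vbr)

lemma T_emb_simps:
  fixes f g :: "(nat \<times> nat,'k::field) fm"
  shows "f \<in> FM tet_S \<Longrightarrow> g \<in> FM tet_S \<Longrightarrow> (Tp.emb (vadd f g) :: 'k tet_lie) = Tp.emb f + Tp.emb g"
    "f \<in> FM tet_S \<Longrightarrow> g \<in> FM tet_S \<Longrightarrow> (Tp.emb (vsub f g) :: 'k tet_lie) = Tp.emb f - Tp.emb g"
    "f \<in> FM tet_S \<Longrightarrow> (Tp.emb (vsmult c f) :: 'k tet_lie) = Tp.qsc c (Tp.emb f)"
    "f \<in> FM tet_S \<Longrightarrow> g \<in> FM tet_S \<Longrightarrow> (Tp.emb (vbr f g) :: 'k tet_lie) = Tp.qbr (Tp.emb f) (Tp.emb g)"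
  by (simp_all add: tet_lie_ops Tp.emb_vadd Tp.emb_vsub Tp.emb_vsmult Tp.emb_vbr)

definition zF :: "nat \<Rightarrow> 'k::field f_lie" where "zF n = Fp.emb (fz n)"
definition XT :: "nat \<Rightarrow> nat \<Rightarrow> 'k::field tet_lie" where "XT i j = Tp.emb (tX i j)"

interpretation Fz: f_relations "Fp.qsc :: 'k::field \<Rightarrow> 'k f_lie \<Rightarrow> 'k f_lie" Fp.qbr zF
proof
  fix i
  show "zF (i + 3) = zF i" by (simp add: zF_def fz_def)
  show "Fp.qbr (Fp.qbr (zF i) (zF (i + 1))) (zF (i + 2)) = 0"
    using Fp.emb_rel[OF f_R_rotations(1)] by (simp add: F_emb_simps zF_def zero_f_lie_def[symmetric])
  show "Fp.qbr (zF i) (Fp.qbr (zF i) (zF (i + 1))) = zF (i + 1) + Fp.qbr (zF (i + 2)) (zF i)"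
    using Fp.emb_rel[OF f_R_rotations(2)] by (simp add: F_emb_simps zF_def zero_f_lie_def[symmetric])
  show "Fp.qbr (Fp.qbr (zF (i + 1)) (Fp.qbr (zF (i + 1)) (Fp.qbr (zF (i + 1)) (zF i))))
      (Fp.qbr (zF (i + 1)) (zF i)) = 0"
    using Fp.emb_rel[OF f_R_rotations(3)] by (simp add: F_emb_simps zF_def zero_f_lie_def[symmetric])
qed

lemma XT_anti:
  assumes "i < 4" "j < 4" "i \<noteq> j"
  shows "(XT j i :: 'k::field tet_lie) = - XT i j"
proof -
  have "vadd (tX i j) (tX j i) \<in> (tet_R :: (nat \<times> nat,'k) fm set)"
    using assms unfolding tet_R_def by blast
  from Tp.emb_rel[OF this] have "(XT i j :: 'k tet_lie) + XT j i = 0"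
    using assms by (simp add: T_emb_simps XT_def zero_tet_lie_def[symmetric])
  then show ?thesis by (rule minus_unique[symmetric])
qed

lemma XT_quadratic:
  assumes "i < 4" "j < 4" "k < 4" "i \<noteq> j" "j \<noteq> k" "i \<noteq> k"
  shows "Tp.qbr (XT i j) (XT j k) = (Tp.qsc 2 (XT i j + XT j k) :: 'k::field tet_lie)"
proof -
  have "vsub (vbr (tX i j) (tX j k)) (vsmult 2 (vadd (tX i j) (tX j k)))
      \<in> (tet_R :: (nat \<times> nat,'k) fm set)"
    using assms unfolding tet_R_def by blast
  from Tp.emb_rel[OF this] show ?thesis
    using assms by (simp add: T_emb_simps XT_def zero_tet_lie_def[symmetric])
qed

lemma XT_dolan_grady:
  assumes "h < 4" "i < 4" "j < 4" "k < 4" "h \<noteq> i" "h \<noteq> j" "h \<noteq> k" "i \<noteq> j" "i \<noteq> k" "j \<noteq> k"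
  shows "T.dolan_grady (XT h i) (XT j k :: 'k::field tet_lie)"
proof -
  have "vsub (vbr (tX h i) (vbr (tX h i) (vbr (tX h i) (tX j k)))) (vsmult 4 (vbr (tX h i) (tX j k)))
      \<in> (tet_R :: (nat \<times> nat,'k) fm set)"
    using assms unfolding tet_R_def by blast
  from Tp.emb_rel[OF this] show ?thesis
    using assms by (simp add: T_emb_simps XT_def zero_tet_lie_def[symmetric] T.dolan_grady_def)
qed

interpretation TX: tet_relations "Tp.qsc :: 'k::field \<Rightarrow> 'k tet_lie \<Rightarrow> 'k tet_lie" Tp.qbr XT
  by unfold_locales (fact XT_anti XT_quadratic XT_dolan_grady)+

lemma vsubst_tet_R_pideal:
  fixes \<sigma> :: "nat \<times> nat \<Rightarrow> (nat,'k::field) fm"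
  assumes \<sigma>: "\<sigma> ` tet_S \<subseteq> FM f_S"
    and X: "tet_relations Fp.qsc Fp.qbr (\<lambda>i j. Fp.emb (\<sigma> (i, j)) :: 'k f_lie)"
    and r: "r \<in> tet_R"
  shows "vsubst \<sigma> r \<in> pideal f_S f_R"
proof -
  interpret X: tet_relations Fp.qsc Fp.qbr "\<lambda>i j. Fp.emb (\<sigma> (i, j)) :: 'k f_lie" by (rule X)
  have \<sigma>_FM: "\<sigma> (i, j) \<in> FM f_S" if "i < 4" "j < 4" "i \<noteq> j" for i j
    using \<sigma> that by (auto simp: tet_S_def)
  from r have "(Fp.emb (vsubst \<sigma> r) :: 'k f_lie) = 0"
  proof (cases rule: tet_R_cases)
    case (anti i j)
    then show ?thesis
      using X.X_anti[of i j] \<sigma>_FM[of i j] \<sigma>_FM[of j i] by (simp add: tX_def vsubst_simps F_emb_simps)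
  next
    case (quadratic i j k)
    then show ?thesis
      using X.X_quadratic[of i j k] \<sigma>_FM[of i j] \<sigma>_FM[of j k] by (simp add: tX_def vsubst_simps F_emb_simps)
  next
    case (cubic h i j k)
    then show ?thesis
      using X.X_dolan_grady[of h i j k] \<sigma>_FM[of h i] \<sigma>_FM[of j k]
      by (simp add: tX_def vsubst_simps F_emb_simps F.dolan_grady_def)
  qed
  moreover have "vsubst \<sigma> r \<in> FM f_S"
    using vsubst_FM[OF \<sigma>] tet_R_FM r by blast
  ultimately show ?thesis
    by (simp add: Fp.emb_eq_vzero_iff zero_f_lie_def)
qed

lemma vsubst_f_R_pideal:
  fixes \<tau> :: "nat \<Rightarrow> (nat \<times> nat,'k::field) fm"
  assumes \<tau>: "\<tau> ` f_S \<subseteq> FM tet_S"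
    and z: "f_relations Tp.qsc Tp.qbr (\<lambda>n. Tp.emb (\<tau> n) :: 'k tet_lie)"
    and r: "r \<in> f_R"
  shows "vsubst \<tau> r \<in> pideal tet_S tet_R"
proof -
  interpret z: f_relations Tp.qsc Tp.qbr "\<lambda>n. Tp.emb (\<tau> n) :: 'k tet_lie" by (rule z)
  have \<tau>_FM: "\<tau> n \<in> FM tet_S" if "n < 3" for n
    using \<tau> less_3_in_f_S[OF that] by blast
  have fz_UNIV: "fz n \<in> FM UNIV" for n
    by (simp add: fz_def)
  have fz: "vsubst \<tau> (fz n) = \<tau> (n mod 3)" and emb_mod: "Tp.emb (\<tau> (n mod 3)) = Tp.emb (\<tau> n)" for n
    using z.z_mod[of n] by (simp_all add: fz_def)
  from r have "(Tp.emb (vsubst \<tau> r) :: 'k tet_lie) = 0"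
  proof (cases rule: f_R_cases)
    case (rel1 i)
    then show ?thesis
      using z.f_rel1[of i] by (simp add: vsubst_simps fz_UNIV fz \<tau>_FM T_emb_simps emb_mod)
  next
    case (rel2 i)
    then show ?thesis
      using z.f_rel2[of i] by (simp add: vsubst_simps fz_UNIV fz \<tau>_FM T_emb_simps emb_mod)
  next
    case (rel3 i)
    then show ?thesis
      using z.f_rel3[of i] by (simp add: vsubst_simps fz_UNIV fz \<tau>_FM T_emb_simps emb_mod)
  qed
  moreover have "vsubst \<tau> r \<in> FM tet_S"
    using vsubst_FM[OF \<tau>] f_R_FM r by blast
  ultimately show ?thesis
    by (simp add: Tp.emb_eq_vzero_iff zero_tet_lie_def)
qed

definition phi_gen :: "nat \<times> nat \<Rightarrow> (nat,'k::field) fm" where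
  "phi_gen p = edge_table (vsmult (-1)) vzero
     (vsmult 2 (vadd (vgen 2) (vsmult (-1) (vbr (vgen 1) (vgen 2)))))
     (vsmult 2 (vadd (vgen 2) (vbr (vgen 1) (vgen 2))))
     (vsmult 2 (vadd (vgen 0) (vsmult (-1) (vbr (vgen 2) (vgen 0)))))
     (vsmult 2 (vadd (vgen 0) (vbr (vgen 2) (vgen 0))))
     (vsmult 2 (vadd (vgen 1) (vsmult (-1) (vbr (vgen 0) (vgen 1)))))
     (vsmult 2 (vadd (vgen 1) (vbr (vgen 0) (vgen 1))))
     (fst p) (snd p)"

definition psi_gen :: "nat \<Rightarrow> (nat \<times> nat,'k::field) fm" where
  "psi_gen n = vsmult (1/4)
     (if n mod 3 = 0 then vadd (tX 0 2) (tX 3 1)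
      else if n mod 3 = 1 then vadd (tX 0 3) (tX 1 2) else vadd (tX 0 1) (tX 2 3))"

lemma FM_vgen_f_S [simp]: "n < 3 \<Longrightarrow> vgen n \<in> FM f_S"
  by (simp add: less_3_in_f_S)

lemma FM_phi_gen: "phi_gen p \<in> FM f_S"
  by (simp add: phi_gen_def edge_table_def)

lemma FM_psi_gen: "psi_gen n \<in> FM tet_S"
  by (simp add: psi_gen_def)

lemma phi_gen_image_FM: "phi_gen ` tet_S \<subseteq> FM f_S"
  using FM_phi_gen by blast

lemma psi_gen_image_FM: "psi_gen ` f_S \<subseteq> FM tet_S"
  using FM_psi_gen by blast

lemma emb_phi_gen: "(\<lambda>i j. Fp.emb (phi_gen (i, j))) = (F.X_of zF :: nat \<Rightarrow> nat \<Rightarrow> 'k::field f_lie)"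
  unfolding phi_gen_def F.X_of_def edge_table_def
  by (intro ext) (simp add: F_emb_simps zF_def fz_def F.sc_minus_left F.sc_one zero_f_lie_def[symmetric])

lemma emb_psi_gen: "(\<lambda>n. Tp.emb (psi_gen n)) = (T.z_of XT :: nat \<Rightarrow> 'k::field tet_lie)"
  unfolding psi_gen_def T.z_of_def XT_def by (intro ext) (simp add: T_emb_simps)

lemma emb_vsubst_phi_gen:
  fixes \<tau> :: "nat \<Rightarrow> (nat \<times> nat,'k::field) fm"
  assumes \<tau>: "\<tau> ` f_S \<subseteq> FM tet_S"
  shows "(Tp.emb (vsubst \<tau> (phi_gen (i, j))) :: 'k tet_lie) = T.X_of (\<lambda>n. Tp.emb (\<tau> n)) i j"
proof -
  have "\<tau> n \<in> FM tet_S" if "n < 3" for n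
    using \<tau> less_3_in_f_S[OF that] by blast
  then show ?thesis
    unfolding phi_gen_def T.X_of_def edge_table_def
    by (simp add: vsubst_simps T_emb_simps T.sc_minus_left T.sc_one zero_tet_lie_def[symmetric])
qed

lemma emb_vsubst_psi_gen:
  fixes \<sigma> :: "nat \<times> nat \<Rightarrow> (nat,'k::field) fm"
  assumes \<sigma>: "\<sigma> ` tet_S \<subseteq> FM f_S"
  shows "(Fp.emb (vsubst \<sigma> (psi_gen n)) :: 'k f_lie) = F.z_of (\<lambda>i j. Fp.emb (\<sigma> (i, j))) n"
proof -
  have "\<sigma> (i, j) \<in> FM f_S" if "i < 4" "j < 4" "i \<noteq> j" for i j
    using \<sigma> that by (auto simp: tet_S_def)
  then show ?thesis
    unfolding psi_gen_def F.z_of_def by (simp add: tX_def vsubst_simps F_emb_simps)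
qed

lemma phi_gen_respects_relations:
  "r \<in> tet_R \<Longrightarrow> vsubst phi_gen r \<in> pideal f_S (f_R :: (nat,'k::field) fm set)"
  by (rule vsubst_tet_R_pideal) (use FM_phi_gen Fz.tet_relations_X_of in \<open>auto simp: emb_phi_gen\<close>)

lemma psi_gen_respects_relations:
  assumes "(2::'k::field) \<noteq> 0"
  shows "r \<in> f_R \<Longrightarrow> vsubst psi_gen r \<in> pideal tet_S (tet_R :: (nat \<times> nat,'k) fm set)"
  by (rule vsubst_f_R_pideal[OF psi_gen_image_FM])
    (use TX.f_relations_z_of[OF assms] in \<open>simp add: emb_psi_gen\<close>)

lemma psi_phi_gen_inverse:
  assumes "(2::'k::field) \<noteq> 0" and "x \<in> tet_S"
  shows "vsub (vsubst psi_gen (phi_gen x)) (vgen x) \<in> pideal tet_S (tet_R :: (nat \<times> nat,'k) fm set)"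
proof -
  obtain i j where x: "x = (i, j)" "i < 4" "j < 4" "i \<noteq> j"
    using assms(2) by (auto simp: tet_S_def)
  have "(Tp.emb (vsubst psi_gen (phi_gen (i, j))) :: 'k tet_lie) = T.X_of (T.z_of XT) i j"
    by (simp add: emb_vsubst_phi_gen[OF psi_gen_image_FM] emb_psi_gen)
  also have "\<dots> = XT i j"
    using TX.X_of_z_of[OF assms(1)] TX.edge_table_X[OF x(2-4)] by simp
  finally have "Tp.emb (vsubst psi_gen (phi_gen x)) = (Tp.emb (vgen x) :: 'k tet_lie)"
    using x(1) by (simp add: XT_def tX_def)
  then show ?thesis
    using Tp.emb_eq_iff[OF vsubst_FM[OF psi_gen_image_FM FM_phi_gen] FM_vgen[OF assms(2)]] by blast
qed

lemma phi_psi_gen_inverse: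
  assumes "(2::'k::field) \<noteq> 0" and "n \<in> f_S"
  shows "vsub (vsubst phi_gen (psi_gen n)) (vgen n) \<in> pideal f_S (f_R :: (nat,'k) fm set)"
proof -
  have "n < 3" using assms(2) by (auto simp: f_S_def)
  have "(Fp.emb (vsubst phi_gen (psi_gen n)) :: 'k f_lie) = F.z_of (F.X_of zF) n"
    using FM_phi_gen by (subst emb_vsubst_psi_gen) (auto simp: emb_phi_gen)
  also have "\<dots> = Fp.emb (vgen n)"
    using assms(1) \<open>n < 3\<close> by (simp add: F.z_of_X_of zF_def fz_def)
  finally show ?thesis
    using Fp.emb_eq_iff[OF vsubst_FM[OF phi_gen_image_FM FM_psi_gen] FM_vgen[OF assms(2)]] by blast
qed

theorem theorem5p2:
  assumes char_not_2: "(2::'k::field) \<noteq> 0"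
  shows "\<exists>\<Phi>. plie_iso tet_S (tet_R :: (nat \<times> nat, 'k) fm set) f_S (f_R :: (nat, 'k) fm set) \<Phi> \<and>
     \<Phi> (TX 0 1) = Fsmult 2 (Fadd (Z 2) (Fsmult (-1) (Fbr (Z 1) (Z 2)))) \<and>
     \<Phi> (TX 2 3) = Fsmult 2 (Fadd (Z 2) (Fbr (Z 1) (Z 2))) \<and>
     \<Phi> (TX 0 2) = Fsmult 2 (Fadd (Z 0) (Fsmult (-1) (Fbr (Z 2) (Z 0)))) \<and>
     \<Phi> (TX 3 1) = Fsmult 2 (Fadd (Z 0) (Fbr (Z 2) (Z 0))) \<and>
     \<Phi> (TX 0 3) = Fsmult 2 (Fadd (Z 1) (Fsmult (-1) (Fbr (Z 0) (Z 1)))) \<and>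
     \<Phi> (TX 1 2) = Fsmult 2 (Fadd (Z 1) (Fbr (Z 0) (Z 1)))"
proof (intro exI conjI)
  let ?\<Phi> = "phom phi_gen f_S (f_R :: (nat, 'k) fm set)"
  show "plie_iso tet_S tet_R f_S f_R ?\<Phi>"
    by (rule plie_iso_phom[OF tet_R_FM f_R_FM phi_gen_image_FM psi_gen_image_FM
          phi_gen_respects_relations psi_gen_respects_relations psi_phi_gen_inverse
          phi_psi_gen_inverse]) (use char_not_2 in auto)
  have "?\<Phi> (TX i j) = pcls f_S f_R (phi_gen (i, j))" if "(i, j) \<in> tet_S" for i j
    unfolding pgen_def using that
    by (simp add: phom_pcls[OF tet_R_FM phi_gen_image_FM phi_gen_respects_relations])
  then show "?\<Phi> (TX 0 1) = Fsmult 2 (Fadd (Z 2) (Fsmult (-1) (Fbr (Z 1) (Z 2))))"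
    and "?\<Phi> (TX 2 3) = Fsmult 2 (Fadd (Z 2) (Fbr (Z 1) (Z 2)))"
    and "?\<Phi> (TX 0 2) = Fsmult 2 (Fadd (Z 0) (Fsmult (-1) (Fbr (Z 2) (Z 0))))"
    and "?\<Phi> (TX 3 1) = Fsmult 2 (Fadd (Z 0) (Fbr (Z 2) (Z 0)))"
    and "?\<Phi> (TX 0 3) = Fsmult 2 (Fadd (Z 1) (Fsmult (-1) (Fbr (Z 0) (Z 1))))"
    and "?\<Phi> (TX 1 2) = Fsmult 2 (Fadd (Z 1) (Fbr (Z 0) (Z 1)))"
    by (simp_all add: tet_S_def pgen_def padd_pcls psmult_pcls pbr_pcls phi_gen_def edge_table_def)
qed

end
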